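(* For each $F\in L^2(\Omega)$ there exists a unique $w$ with $\rho^{m-1}w\in H^1_0(\Omega)$ such that ${\mathcal T}_a w=F$, i.e. $W:=\rho^{m-1}w$ is a weak solution of $$L_a^{0,0}W-\frac{(m-1)(m-2)}{\rho^2}W=\rho^{m-2}F\quad\text{in }\Omega .$$ Furthermore, $\|\rho^{m-1}w\|_{H^1(\Omega)}\le C\|F\|_{L^2(\Omega)}$ with $C$ independent of $F$.
   Context: $\mathbb{T}:=\mathbb{R}/2\pi\mathbb{Z}$, $\Omega:=\{(R,\theta)\in(1,7)\times\mathbb{T}\}$ (polar coordinates on an annulus); $L^2(\Omega)$, $H^1(\Omega)$, $H^1_0(\Omega)$ are taken in coordinates $(R,\theta)$ with measure $dR\,d\theta$. $\rho(R):=\frac16(R-1)(7-R)$. Standing assumptions: $a\ge4$ is a real parameter, $j\ge4$ is an integer and $m\in\mathbb{R}\setminus\frac12\mathbb{Z}$ with $m\ge j+2$. The operator $L_a^{0,0}u:=\partial_R^2u+\frac{1}{R+a-4}\partial_Ru+\frac{1}{(R+a-4)^2}\partial_\theta^2u$ (the Laplacian in these coordinates), and ${\mathcal T}_aw:=\rho\Big[\rho^{1-m}L_a^{0,0}(\rho^{m-1}w)-\frac{(m-1)(m-2)}{\rho^2}w\Big]$. Weak solution means: for all $V\in H^1_0(\Omega)$, $\int_\Omega[\partial_RW\partial_RV+\frac{\partial_\theta W\partial_\theta V}{(R+a-4)^2}+\frac{(m-1)(m-2)}{\rho^2}WV](R+a-4)\,dR\,d\theta=-\int_\Omega\rho^{m-2}FV(R+a-4)\,dR\,d\theta$.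 *)

theory Defs
  imports "HOL-Analysis.Analysis"
begin

text \<open>Polar coordinates (R,theta) on the annulus Omega = (1,7) x T, T = R/2piZ.
  Functions on Omega are represented as functions on real x real; only their values on
  the fundamental strip Om = (1,7) x (0,2pi) matter (integration is over Om with
  Lebesgue measure dR dtheta). Periodicity in theta enters through the test functions,
  which are 2pi-periodic in theta.\<close>

definition Om :: "(real \<times> real) set" where
  "Om = {1<..<7} \<times> {0<..<2*pi}"

definition rho :: "real \<Rightarrow> real" where
  "rho R = (R - 1) * (7 - R) / 6"

definition dR :: "(real \<times> real \<Rightarrow> real) \<Rightarrow> real \<times> real \<Rightarrow> real" where
  "dR f = (\<lambda>(R, t). deriv (\<lambda>r. f (r, t)) R)"

definition dT :: "(real \<times> real \<Rightarrow> real) \<Rightarrow> real \<times> real \<Rightarrow> real" where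
  "dT f = (\<lambda>(R, t). deriv (\<lambda>s. f (R, s)) t)"

fun pd :: "bool list \<Rightarrow> (real \<times> real \<Rightarrow> real) \<Rightarrow> real \<times> real \<Rightarrow> real" where
  "pd [] f = f"
| "pd (b # bs) f = (if b then dR (pd bs f) else dT (pd bs f))"

definition smooth :: "(real \<times> real \<Rightarrow> real) \<Rightarrow> bool" where
  "smooth f \<longleftrightarrow> (\<forall>bs. continuous_on UNIV (pd bs f) \<and>
      (\<forall>R t. (\<lambda>r. pd bs f (r, t)) differentiable (at R) \<and>
             (\<lambda>s. pd bs f (R, s)) differentiable (at t)))"

definition test :: "(real \<times> real \<Rightarrow> real) \<Rightarrow> bool" where
  "test \<phi> \<longleftrightarrow> smooth \<phi> \<and> (\<forall>R t. \<phi> (R, t + 2*pi) = \<phi> (R, t)) \<and>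
     (\<exists>\<delta>>0. \<forall>R t. (R \<le> 1 + \<delta> \<or> 7 - \<delta> \<le> R) \<longrightarrow> \<phi> (R, t) = 0)"

definition L2 :: "(real \<times> real \<Rightarrow> real) \<Rightarrow> bool" where
  "L2 f \<longleftrightarrow> set_borel_measurable lborel Om f \<and> set_integrable lborel Om (\<lambda>x. (f x)^2)"

definition L2norm :: "(real \<times> real \<Rightarrow> real) \<Rightarrow> real" where
  "L2norm f = sqrt (LINT x:Om|lborel. (f x)^2)"

definition weak_derivs ::
  "(real \<times> real \<Rightarrow> real) \<Rightarrow> (real \<times> real \<Rightarrow> real) \<Rightarrow> (real \<times> real \<Rightarrow> real) \<Rightarrow> bool" where
  "weak_derivs u gR gT \<longleftrightarrow> (\<forall>\<phi>. test \<phi> \<longrightarrow>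
     (LINT x:Om|lborel. u x * dR \<phi> x) = - (LINT x:Om|lborel. gR x * \<phi> x) \<and>
     (LINT x:Om|lborel. u x * dT \<phi> x) = - (LINT x:Om|lborel. gT x * \<phi> x))"

definition H1 ::
  "(real \<times> real \<Rightarrow> real) \<Rightarrow> (real \<times> real \<Rightarrow> real) \<Rightarrow> (real \<times> real \<Rightarrow> real) \<Rightarrow> bool" where
  "H1 u gR gT \<longleftrightarrow> L2 u \<and> L2 gR \<and> L2 gT \<and> weak_derivs u gR gT"

definition H1norm ::
  "(real \<times> real \<Rightarrow> real) \<Rightarrow> (real \<times> real \<Rightarrow> real) \<Rightarrow> (real \<times> real \<Rightarrow> real) \<Rightarrow> real" where
  "H1norm u gR gT = sqrt (LINT x:Om|lborel. (u x)^2 + (gR x)^2 + (gT x)^2)"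

definition H10 ::
  "(real \<times> real \<Rightarrow> real) \<Rightarrow> (real \<times> real \<Rightarrow> real) \<Rightarrow> (real \<times> real \<Rightarrow> real) \<Rightarrow> bool" where
  "H10 u gR gT \<longleftrightarrow> H1 u gR gT \<and>
     (\<exists>\<phi>::nat \<Rightarrow> real \<times> real \<Rightarrow> real. (\<forall>n. test (\<phi> n)) \<and>
        (\<lambda>n. LINT x:Om|lborel. (\<phi> n x - u x)^2 + (dR (\<phi> n) x - gR x)^2
                                + (dT (\<phi> n) x - gT x)^2) \<longlonglongrightarrow> 0)"

text \<open>W (with weak gradient (WR, WT)) is a weak solution of
  L_a^{0,0} W - (m-1)(m-2)/rho^2 W = rho^(m-2) F in Omega.\<close>
definition weak_sol :: "real \<Rightarrow> real \<Rightarrow> (real \<times> real \<Rightarrow> real) \<Rightarrow>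
    (real \<times> real \<Rightarrow> real) \<Rightarrow> (real \<times> real \<Rightarrow> real) \<Rightarrow> (real \<times> real \<Rightarrow> real) \<Rightarrow> bool" where
  "weak_sol a m F W WR WT \<longleftrightarrow> (\<forall>V VR VT. H10 V VR VT \<longrightarrow>
     (let I = (\<lambda>x. (WR x * VR x + WT x * VT x / (fst x + a - 4)^2
                    + (m - 1) * (m - 2) / (rho (fst x))^2 * W x * V x) * (fst x + a - 4))
      in set_integrable lborel Om I \<and>
         (LINT x:Om|lborel. I x) =
           - (LINT x:Om|lborel. rho (fst x) powr (m - 2) * F x * V x * (fst x + a - 4))))"

end

theory Submission
  imports Defs
begin

text \<open>Put \<open>c = (m - 1) (m - 2) > 0\<close> and \<open>r = R + a - 4 \<in> [1, a + 3]\<close>. The left-hand side of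
  the weak formulation is the energy inner product
  \<open>B(W, V) = \<integral> (W\<^sub>R V\<^sub>R + W\<^sub>\<theta> V\<^sub>\<theta> / r\<^sup>2 + c W V / \<rho>\<^sup>2) r\<close>, whose energy dominates the
  \<open>H\<^sup>1\<close> norm pointwise and, by Hardy's inequality \<open>\<integral> \<psi>\<^sup>2 / \<rho>\<^sup>2 \<le> 4 \<integral> (\<partial>\<^sub>R \<psi>)\<^sup>2\<close> for test
  functions, is dominated by the \<open>H\<^sup>1\<close> norm on test functions. The load
  \<open>\<ell>(V) = \<integral> \<rho>\<^bsup>m-2\<^esup> F V r\<close> is bounded in energy, so the Dirichlet principle applies: a
  minimising sequence of test functions for \<open>E(\<psi>)/2 + \<ell>(\<psi>)\<close> is Cauchy in energy by the
  parallelogram law, its limit (the energy space is complete by the Riesz--Fischer argument)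
  lies in \<open>H\<^sup>1\<^sub>0\<close> and satisfies the Euler--Lagrange equation \<open>B(W, V) + \<ell>(V) = 0\<close>,
  which is the weak formulation. Testing with \<open>W\<close> itself gives the bound; testing the
  difference of two solutions with itself gives uniqueness.\<close>

abbreviation lborel_Om :: "(real \<times> real) measure" where
  "lborel_Om \<equiv> restrict_space lborel Om"

lemma Om_eq_box: "Om = box (1, 0) (7, 2 * pi)"
  unfolding Om_def by (auto simp: box_prod)

lemma open_Om: "open Om"
  unfolding Om_eq_box by (rule open_box)

lemma sets_Om [measurable, simp]: "Om \<in> sets lborel" "Om \<in> sets borel"
  using open_Om by (auto intro: borel_open)

lemma space_lborel_Om [simp]: "space lborel_Om = Om"
  by (simp add: space_restrict_space)

lemma Om_subset_cbox: "Om \<subseteq> cbox (1, 0) (7, 2 * pi)"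
  unfolding Om_eq_box using box_subset_cbox by blast

lemma fst_Om_bounds: "x \<in> Om \<Longrightarrow> 1 < fst x \<and> fst x < 7"
  unfolding Om_def by auto

lemma rho_pos: "1 < R \<Longrightarrow> R < 7 \<Longrightarrow> 0 < rho R"
  unfolding rho_def by simp

lemma rho_pos_Om: "x \<in> Om \<Longrightarrow> 0 < rho (fst x)"
  using fst_Om_bounds rho_pos by blast

lemma rho_le: "rho R \<le> 3 / 2"
proof -
  have "(R - 1) * (7 - R) = 9 - (R - 4)\<^sup>2"
    by (simp add: power2_eq_square algebra_simps)
  then show ?thesis
    unfolding rho_def using zero_le_power2[of "R - 4"] by linarith
qed

lemma continuous_on_rho: "continuous_on UNIV rho"
  unfolding rho_def by (intro continuous_intros) auto

lemma borel_measurable_rho [measurable]: "rho \<in> borel_measurable borel"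
  using continuous_on_rho by (rule borel_measurable_continuous_onI)

lemma finite_measure_lborel_Om: "finite_measure lborel_Om"
proof (rule finite_measureI)
  have "emeasure lborel_Om (space lborel_Om) = emeasure lborel Om"
    by (simp add: emeasure_restrict_space)
  also have "\<dots> \<le> emeasure lborel (cbox (1::real, 0::real) (7, 2 * pi))"
    by (rule emeasure_mono[OF Om_subset_cbox]) simp
  also have "\<dots> < \<infinity>"
    using emeasure_bounded_finite[OF bounded_cbox] by (simp add: less_top)
  finally show "emeasure lborel_Om (space lborel_Om) \<noteq> \<infinity>" by simp
qed

interpretation lborel_Om: finite_measure lborel_Om
  by (rule finite_measure_lborel_Om)

lemma integrable_lborel_Om_iff:
  "integrable lborel_Om f \<longleftrightarrow> set_integrable lborel Om (f :: _ \<Rightarrow> real)"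
  unfolding set_integrable_def by (simp add: integrable_restrict_space)

lemma integral_lborel_Om: "integral\<^sup>L lborel_Om f = (LINT x:Om|lborel. (f x :: real))"
  unfolding set_lebesgue_integral_def by (simp add: integral_restrict_space)

lemma borel_measurable_lborel_Om_iff:
  "f \<in> borel_measurable lborel_Om \<longleftrightarrow> set_borel_measurable lborel Om (f :: _ \<Rightarrow> real)"
  unfolding set_borel_measurable_def by (simp add: borel_measurable_restrict_space_iff)

lemma borel_measurable_lborel_Om_continuous:
  fixes f :: "real \<times> real \<Rightarrow> 'a::topological_space"
  assumes "continuous_on UNIV f"
  shows "f \<in> borel_measurable lborel_Om"
proof -
  have "f \<in> borel_measurable lborel"
    using borel_measurable_continuous_onI[OF assms] by simp
  then show ?thesis by (rule measurable_restrict_space1)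
qed

lemma borel_measurable_fst_lborel_Om [measurable]: "fst \<in> borel_measurable lborel_Om"
  by (rule borel_measurable_lborel_Om_continuous) (intro continuous_intros)

lemma borel_measurable_triple_components:
  fixes U :: "'a \<Rightarrow> real \<times> real \<times> real"
  assumes "U \<in> borel_measurable M"
  shows "(\<lambda>x. fst (U x)) \<in> borel_measurable M" "(\<lambda>x. fst (snd (U x))) \<in> borel_measurable M"
    "(\<lambda>x. snd (snd (U x))) \<in> borel_measurable M"
  using assms by (auto intro!: measurable_compose[OF assms] borel_measurable_continuous_onI
      continuous_intros)

lemma integrable_lborel_Om_dominated:
  fixes f g :: "real \<times> real \<Rightarrow> real"
  assumes "integrable lborel_Om g" "f \<in> borel_measurable lborel_Om"
    "\<And>x. x \<in> Om \<Longrightarrow> \<bar>f x\<bar> \<le> g x"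
  shows "integrable lborel_Om f"
  using assms(1,2)
proof (rule Bochner_Integration.integrable_bound)
  show "AE x in lborel_Om. norm (f x) \<le> norm (g x)"
    using assms(3) by (intro AE_I2) force
qed

lemma integral_lborel_Om_eq_integral_cbox:
  fixes f :: "real \<times> real \<Rightarrow> real"
  assumes "continuous_on (cbox (1, 0) (7, 2 * pi)) f"
  shows "integrable lborel_Om f" "integral\<^sup>L lborel_Om f = integral (cbox (1, 0) (7, 2 * pi)) f"
proof -
  have "set_integrable lborel (cbox (1, 0) (7, 2 * pi)) f"
    unfolding set_integrable_def by (rule borel_integrable_compact[OF compact_cbox assms])
  then have f: "set_integrable lborel Om f"
    by (rule set_integrable_subset) (auto simp: Om_subset_cbox)
  then show "integrable lborel_Om f"
    by (simp add: integrable_lborel_Om_iff)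
  have "integral\<^sup>L lborel_Om f = integral Om f"
    unfolding integral_lborel_Om by (rule set_borel_integral_eq_integral(2)[OF f])
  also have "\<dots> = integral (cbox (1, 0) (7, 2 * pi)) f"
    unfolding Om_eq_box by (rule integral_open_interval)
  finally show "integral\<^sup>L lborel_Om f = integral (cbox (1, 0) (7, 2 * pi)) f" .
qed

lemma integrable_lborel_Om_continuous:
  "continuous_on UNIV (f :: real \<times> real \<Rightarrow> real) \<Longrightarrow> integrable lborel_Om f"
  by (rule integral_lborel_Om_eq_integral_cbox(1)) (rule continuous_on_subset, auto)

lemma L2_iff: "L2 f \<longleftrightarrow> f \<in> borel_measurable lborel_Om \<and> integrable lborel_Om (\<lambda>x. (f x)\<^sup>2)"
  unfolding L2_def by (simp add: borel_measurable_lborel_Om_iff integrable_lborel_Om_iff)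

lemma continuous_on_imp_L2: "continuous_on UNIV f \<Longrightarrow> L2 f"
  unfolding L2_iff
  by (auto intro: borel_measurable_lborel_Om_continuous integrable_lborel_Om_continuous
      continuous_intros)

lemma deriv_linear_combination:
  fixes f g :: "real \<Rightarrow> real"
  assumes "f differentiable at x" "g differentiable at x"
  shows "deriv (\<lambda>r. b * f r + c * g r) x = b * deriv f x + c * deriv g x"
proof -
  have "DERIV f x :> deriv f x" "DERIV g x :> deriv g x"
    using assms by (simp_all add: DERIV_deriv_iff_real_differentiable)
  then have "DERIV (\<lambda>r. b * f r + c * g r) x :> b * deriv f x + c * deriv g x"
    by (auto intro!: derivative_eq_intros)
  then show ?thesis by (rule DERIV_imp_deriv)
qed

lemma smooth_partials_differentiable:
  assumes "smooth f"
  shows "(\<lambda>r. pd bs f (r, t)) differentiable (at R)" "(\<lambda>s. pd bs f (R, s)) differentiable (at t)"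
  using assms unfolding smooth_def by blast+

lemma pd_linear_combination:
  assumes "smooth f" "smooth g"
  shows "pd bs (\<lambda>x. b * f x + c * g x) = (\<lambda>x. b * pd bs f x + c * pd bs g x)"
proof (induction bs)
  case (Cons d bs)
  note f = smooth_partials_differentiable[OF assms(1), of bs]
    and g = smooth_partials_differentiable[OF assms(2), of bs]
  show ?case
    using Cons by (auto simp: fun_eq_iff dR_def dT_def deriv_linear_combination f g)
qed simp

lemma smooth_linear_combination:
  assumes "smooth f" "smooth g"
  shows "smooth (\<lambda>x. b * f x + c * g x)"
  unfolding smooth_def pd_linear_combination[OF assms]
proof (intro allI conjI)
  fix bs R t
  show "continuous_on UNIV (\<lambda>x. b * pd bs f x + c * pd bs g x)"
    using assms unfolding smooth_def by (intro continuous_intros) blast+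
  note f = smooth_partials_differentiable[OF assms(1), of bs]
    and g = smooth_partials_differentiable[OF assms(2), of bs]
  show "(\<lambda>r. b * pd bs f (r, t) + c * pd bs g (r, t)) differentiable at R"
    "(\<lambda>s. b * pd bs f (R, s) + c * pd bs g (R, s)) differentiable at t"
    using f g by (intro differentiable_add differentiable_mult differentiable_const; blast)+
qed

lemma test_linear_combination:
  assumes "test f" "test g"
  shows "test (\<lambda>x. b * f x + c * g x)"
proof -
  obtain d1 where d1: "d1 > 0" "\<And>R t. R \<le> 1 + d1 \<or> 7 - d1 \<le> R \<Longrightarrow> f (R, t) = 0"
    using assms(1) unfolding test_def by blast
  obtain d2 where d2: "d2 > 0" "\<And>R t. R \<le> 1 + d2 \<or> 7 - d2 \<le> R \<Longrightarrow> g (R, t) = 0"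
    using assms(2) unfolding test_def by blast
  have "\<forall>R t. R \<le> 1 + min d1 d2 \<or> 7 - min d1 d2 \<le> R \<longrightarrow> b * f (R, t) + c * g (R, t) = 0"
    using d1 d2 by (auto simp: min_def split: if_splits)
  moreover have "smooth (\<lambda>x. b * f x + c * g x)"
    using assms by (intro smooth_linear_combination) (auto simp: test_def)
  ultimately show ?thesis
    using assms d1(1) d2(1) unfolding test_def by (metis min_less_iff_conj)
qed

lemma test_zero: "test (\<lambda>x. 0)"
proof -
  have "pd bs (\<lambda>x. 0) = (\<lambda>x. 0)" for bs
    by (induction bs) (auto simp: dR_def dT_def fun_eq_iff)
  then show ?thesis
    unfolding test_def smooth_def by (auto intro: exI[of _ 1])
qed

lemma continuous_on_test:
  assumes "test f"
  shows "continuous_on UNIV f" "continuous_on UNIV (dR f)" "continuous_on UNIV (dT f)"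
  using assms unfolding test_def smooth_def by (metis pd.simps)+

lemma test_has_real_derivative:
  assumes "test f"
  shows "((\<lambda>r. f (r, t)) has_real_derivative dR f (R, t)) (at R)"
    "((\<lambda>s. f (R, s)) has_real_derivative dT f (R, t)) (at t)"
  using smooth_partials_differentiable[of f "[]"] assms
  by (simp_all add: test_def dR_def dT_def DERIV_deriv_iff_real_differentiable)

lemma test_boundary_zero:
  assumes "test f"
  shows "f (1, t) = 0" "f (7, t) = 0"
  using assms unfolding test_def by fastforce+

lemma test_periodic:
  assumes "test f"
  shows "f (R, 2 * pi) = f (R, 0)"
  using assms unfolding test_def by (metis add_0)

lemma test_vanishes_near_boundary:
  assumes "test f"
  obtains d where "d > 0"
    "\<And>x. fst x \<le> 1 + d \<or> 7 - d \<le> fst x \<Longrightarrow> f x = 0 \<and> dR f x = 0 \<and> dT f x = 0"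
proof -
  obtain d where d: "d > 0" "\<And>R t. R \<le> 1 + d \<or> 7 - d \<le> R \<Longrightarrow> f (R, t) = 0"
    using assms unfolding test_def by blast
  have "f (R, t) = 0 \<and> dR f (R, t) = 0 \<and> dT f (R, t) = 0"
    if R: "R \<le> 1 + d / 2 \<or> 7 - d / 2 \<le> R" for R t
  proof -
    have "(\<lambda>s. f (R, s)) = (\<lambda>s. 0)"
      using d R by (force simp: fun_eq_iff)
    then have "dT f (R, t) = 0" by (simp add: dT_def)
    let ?S = "{r. r < 1 + d} \<union> {r. 7 - d < r}"
    have "open ?S" "R \<in> ?S" "\<And>r. r \<in> ?S \<Longrightarrow> 0 = f (r, t)"
      using d R by (auto intro!: open_Un open_Collect_less continuous_intros)
    then have "((\<lambda>r. f (r, t)) has_real_derivative 0) (at R)"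
      using has_field_derivative_transform_within_open[of "\<lambda>r. 0" 0 R ?S] by simp
    then have "dR f (R, t) = 0" by (simp add: dR_def DERIV_imp_deriv)
    with \<open>dT f (R, t) = 0\<close> show ?thesis using d R by force
  qed
  then show ?thesis using that[of "d / 2"] d(1) by force
qed

definition triple ::
  "(real \<times> real \<Rightarrow> real) \<Rightarrow> (real \<times> real \<Rightarrow> real) \<Rightarrow> (real \<times> real \<Rightarrow> real) \<Rightarrow>
     real \<times> real \<Rightarrow> real \<times> real \<times> real" where
  "triple u v w = (\<lambda>x. (u x, v x, w x))"

definition jet :: "(real \<times> real \<Rightarrow> real) \<Rightarrow> real \<times> real \<Rightarrow> real \<times> real \<times> real" where
  "jet f = triple f (dR f) (dT f)"

lemma norm_triple_sq: "(norm (triple u v w x))\<^sup>2 = (u x)\<^sup>2 + (v x)\<^sup>2 + (w x)\<^sup>2"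
  by (simp add: triple_def norm_Pair)

lemma norm_sq_components: "(norm (v :: real \<times> real \<times> real))\<^sup>2 = (fst v)\<^sup>2 + (fst (snd v))\<^sup>2 + (snd (snd v))\<^sup>2"
  by (cases v) (simp add: norm_Pair)

lemma jet_linear_combination:
  assumes "test f" "test g"
  shows "jet (\<lambda>x. b * f x + c * g x) = (\<lambda>x. b *\<^sub>R jet f x + c *\<^sub>R jet g x)"
  using pd_linear_combination[of f g "[True]" b c] pd_linear_combination[of f g "[False]" b c]
    assms
  by (simp add: test_def jet_def triple_def fun_eq_iff)

lemma continuous_on_jet: "test f \<Longrightarrow> continuous_on UNIV (jet f)"
  unfolding jet_def triple_def using continuous_on_test by (intro continuous_on_Pair) auto

lemma test_L2:
  assumes "test f"
  shows "L2 f" "L2 (dR f)" "L2 (dT f)"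
  using continuous_on_test[OF assms] by (auto intro: continuous_on_imp_L2)

section \<open>Integration by parts and Hardy's inequality\<close>

lemma continuous_on_vanishing_near_boundary:
  fixes f :: "real \<times> real \<Rightarrow> real"
  assumes "continuous_on {x. 1 < fst x \<and> fst x < 7} f" "d > 0"
    "\<And>x. fst x \<le> 1 + d \<or> 7 - d \<le> fst x \<Longrightarrow> f x = 0"
  shows "continuous_on UNIV f"
proof (rule continuous_at_imp_continuous_on, intro ballI)
  fix x :: "real \<times> real"
  let ?A = "{x :: real \<times> real. 1 < fst x \<and> fst x < 7}"
  let ?B = "{x :: real \<times> real. fst x < 1 + d} \<union> {x. 7 - d < fst x}"
  have "open ?A" "open ?B"
    by (intro open_Collect_conj open_Un open_Collect_less continuous_intros)+
  moreover have "continuous_on ?B f"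
    using assms(3) continuous_on_eq[of ?B "\<lambda>x. 0" f] by force
  moreover have "x \<in> ?A \<or> x \<in> ?B"
    using assms(2) by auto
  ultimately show "isCont f x"
    using assms(1) continuous_on_eq_continuous_at by blast
qed

text \<open>Both identities reduce by Fubini to the fundamental theorem of calculus on a line,
  where the boundary terms vanish: in \<open>R\<close> because \<open>h\<close> vanishes at \<open>R = 1, 7\<close>, in \<open>\<theta>\<close>
  by periodicity.\<close>

lemma integral_R_derivative_eq_0:
  fixes h D :: "real \<times> real \<Rightarrow> real"
  assumes "continuous_on UNIV D"
    "\<And>R t. ((\<lambda>r. h (r, t)) has_real_derivative D (R, t)) (at R)"
    "\<And>t. h (1, t) = 0" "\<And>t. h (7, t) = 0"
  shows "integral\<^sup>L lborel_Om D = 0"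
proof -
  have D: "continuous_on (cbox (1, 0) (7, 2 * pi)) D"
    using assms(1) by (rule continuous_on_subset) simp
  have line: "integral {1..7} (\<lambda>R. D (R, t)) = 0" for t
  proof -
    have "((\<lambda>R. D (R, t)) has_integral (h (7, t) - h (1, t))) {1..7}"
    proof (rule fundamental_theorem_of_calculus_interior)
      show "continuous_on {1..7} (\<lambda>r. h (r, t))"
        by (rule continuous_at_imp_continuous_on) (auto intro: DERIV_isCont[OF assms(2)])
      show "((\<lambda>r. h (r, t)) has_vector_derivative D (x, t)) (at x)" for x
        using assms(2) has_real_derivative_iff_has_vector_derivative by blast
    qed simp
    then show ?thesis
      using assms(3,4) by (simp add: integral_unique)
  qed
  have "integral\<^sup>L lborel_Om D = integral (cbox 1 7) (\<lambda>R. integral (cbox 0 (2 * pi)) (\<lambda>t. D (R, t)))"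
    using integral_lborel_Om_eq_integral_cbox[OF D] integral_prod_continuous[OF D] by simp
  also have "\<dots> = integral (cbox 0 (2 * pi)) (\<lambda>t. integral (cbox 1 7) (\<lambda>R. D (R, t)))"
    by (rule integral_swap_continuous[where f = "\<lambda>R t. D (R, t)"]) (simp add: D)
  finally show ?thesis by (simp add: line)
qed

lemma integral_theta_derivative_eq_0:
  fixes h D :: "real \<times> real \<Rightarrow> real"
  assumes "continuous_on UNIV D"
    "\<And>R t. ((\<lambda>s. h (R, s)) has_real_derivative D (R, t)) (at t)"
    "\<And>R. h (R, 2 * pi) = h (R, 0)"
  shows "integral\<^sup>L lborel_Om D = 0"
proof -
  have D: "continuous_on (cbox (1, 0) (7, 2 * pi)) D"
    using assms(1) by (rule continuous_on_subset) simp
  have line: "integral {0..2 * pi} (\<lambda>t. D (R, t)) = 0" for R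
  proof -
    have "((\<lambda>t. D (R, t)) has_integral (h (R, 2 * pi) - h (R, 0))) {0..2 * pi}"
    proof (rule fundamental_theorem_of_calculus_interior)
      show "continuous_on {0..2 * pi} (\<lambda>s. h (R, s))"
        by (rule continuous_at_imp_continuous_on) (auto intro: DERIV_isCont[OF assms(2)])
      show "((\<lambda>s. h (R, s)) has_vector_derivative D (R, x)) (at x)" for x
        using assms(2) has_real_derivative_iff_has_vector_derivative by blast
    qed simp
    then show ?thesis
      using assms(3) by (simp add: integral_unique)
  qed
  have "integral\<^sup>L lborel_Om D = integral (cbox 1 7) (\<lambda>R. integral (cbox 0 (2 * pi)) (\<lambda>t. D (R, t)))"
    using integral_lborel_Om_eq_integral_cbox[OF D] integral_prod_continuous[OF D] by simp
  then show ?thesis by (simp add: line)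
qed

lemma integration_by_parts_R:
  assumes f: "test f" and g: "test g"
  shows "integral\<^sup>L lborel_Om (\<lambda>x. f x * dR g x) = - integral\<^sup>L lborel_Om (\<lambda>x. dR f x * g x)"
proof -
  let ?D = "\<lambda>x. dR f x * g x + f x * dR g x"
  have "integral\<^sup>L lborel_Om ?D = 0"
  proof (rule integral_R_derivative_eq_0[where h = "\<lambda>x. f x * g x"])
    show "continuous_on UNIV ?D"
      using continuous_on_test[OF f] continuous_on_test[OF g] by (intro continuous_intros)
    show "((\<lambda>r. f (r, t) * g (r, t)) has_real_derivative ?D (R, t)) (at R)" for R t
      using test_has_real_derivative(1)[OF f] test_has_real_derivative(1)[OF g]
      by (auto intro!: derivative_eq_intros)
  qed (simp_all add: test_boundary_zero[OF f])
  moreover have "integral\<^sup>L lborel_Om ?D =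
      integral\<^sup>L lborel_Om (\<lambda>x. dR f x * g x) + integral\<^sup>L lborel_Om (\<lambda>x. f x * dR g x)"
    using continuous_on_test[OF f] continuous_on_test[OF g]
    by (intro Bochner_Integration.integral_add integrable_lborel_Om_continuous continuous_intros)
  ultimately show ?thesis by simp
qed

lemma integration_by_parts_theta:
  assumes f: "test f" and g: "test g"
  shows "integral\<^sup>L lborel_Om (\<lambda>x. f x * dT g x) = - integral\<^sup>L lborel_Om (\<lambda>x. dT f x * g x)"
proof -
  let ?D = "\<lambda>x. dT f x * g x + f x * dT g x"
  have "integral\<^sup>L lborel_Om ?D = 0"
  proof (rule integral_theta_derivative_eq_0[where h = "\<lambda>x. f x * g x"])
    show "continuous_on UNIV ?D"
      using continuous_on_test[OF f] continuous_on_test[OF g] by (intro continuous_intros)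
    show "((\<lambda>s. f (R, s) * g (R, s)) has_real_derivative ?D (R, t)) (at t)" for R t
      using test_has_real_derivative(2)[OF f] test_has_real_derivative(2)[OF g]
      by (auto intro!: derivative_eq_intros)
  qed (simp_all add: test_periodic[OF f] test_periodic[OF g])
  moreover have "integral\<^sup>L lborel_Om ?D =
      integral\<^sup>L lborel_Om (\<lambda>x. dT f x * g x) + integral\<^sup>L lborel_Om (\<lambda>x. f x * dT g x)"
    using continuous_on_test[OF f] continuous_on_test[OF g]
    by (intro Bochner_Integration.integral_add integrable_lborel_Om_continuous continuous_intros)
  ultimately show ?thesis by simp
qed

text \<open>Hardy's inequality comes from completing the square with the weight
  \<open>g = (R - 4) / ((R - 1) (7 - R))\<close>, which satisfies \<open>g' - g\<^sup>2 = 1 / (4 \<rho>\<^sup>2)\<close>: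
  \<open>(\<partial>\<^sub>R \<psi>)\<^sup>2 - \<psi>\<^sup>2 / (4 \<rho>\<^sup>2) = (\<partial>\<^sub>R \<psi> + g \<psi>)\<^sup>2 - \<partial>\<^sub>R (g \<psi>\<^sup>2)\<close>.\<close>

definition hardy_weight :: "real \<Rightarrow> real" where
  "hardy_weight R = (R - 4) / ((R - 1) * (7 - R))"

definition hardy_weight' :: "real \<Rightarrow> real" where
  "hardy_weight' R = (R\<^sup>2 - 8 * R + 25) / ((R - 1) * (7 - R))\<^sup>2"

lemma hardy_identity:
  assumes "1 < R" "R < 7"
  shows "v\<^sup>2 - u\<^sup>2 / (rho R)\<^sup>2 / 4 =
    (v + hardy_weight R * u)\<^sup>2 - (hardy_weight' R * u\<^sup>2 + 2 * hardy_weight R * u * v)"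
proof -
  have completed_square: "v\<^sup>2 - u\<^sup>2 / (p / 6)\<^sup>2 / 4 =
      (v + q / p * u)\<^sup>2 - ((q\<^sup>2 + 9) / p\<^sup>2 * u\<^sup>2 + 2 * (q / p) * u * v)"
    if "p \<noteq> 0" for p q :: real
    using that by (simp add: field_simps power2_eq_square)
  have "R\<^sup>2 - 8 * R + 25 = (R - 4)\<^sup>2 + 9"
    by (simp add: power2_eq_square algebra_simps)
  then show ?thesis
    unfolding hardy_weight_def hardy_weight'_def rho_def
    using completed_square[of "(R - 1) * (7 - R)" "R - 4"] assms by simp
qed

lemma hardy_weight_has_real_derivative:
  assumes "1 < R" "R < 7"
  shows "(hardy_weight has_real_derivative hardy_weight' R) (at R)"
proof -
  have "(R - 1) * (7 - R) \<noteq> 0" using assms by simp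
  then have "(hardy_weight has_real_derivative
      ((R - 1) * (7 - R) - (R - 4) * ((7 - R) - (R - 1))) / ((R - 1) * (7 - R))\<^sup>2) (at R)"
    unfolding hardy_weight_def
    by (auto intro!: derivative_eq_intros simp: power2_eq_square)
  moreover have "(R - 1) * (7 - R) - (R - 4) * ((7 - R) - (R - 1)) = R\<^sup>2 - 8 * R + 25"
    by (simp add: algebra_simps power2_eq_square)
  ultimately show ?thesis
    unfolding hardy_weight'_def by simp
qed

lemma hardy_remainder:
  assumes psi: "test \<psi>"
  defines "D \<equiv> \<lambda>x. if 1 < fst x \<and> fst x < 7
    then hardy_weight' (fst x) * (\<psi> x)\<^sup>2 + 2 * hardy_weight (fst x) * \<psi> x * dR \<psi> x else 0"
  shows "continuous_on UNIV D" "integral\<^sup>L lborel_Om D = 0"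
proof -
  obtain d where d: "d > 0"
    "\<And>x. fst x \<le> 1 + d \<or> 7 - d \<le> fst x \<Longrightarrow> \<psi> x = 0 \<and> dR \<psi> x = 0 \<and> dT \<psi> x = 0"
    using test_vanishes_near_boundary[OF psi] by blast
  have c: "continuous_on UNIV \<psi>" "continuous_on UNIV (dR \<psi>)"
    using continuous_on_test[OF psi] by auto
  show cD: "continuous_on UNIV D"
  proof (rule continuous_on_vanishing_near_boundary[OF _ d(1)])
    show "continuous_on {x. 1 < fst x \<and> fst x < 7} D"
      unfolding D_def hardy_weight_def hardy_weight'_def
      by (rule continuous_on_eq[rotated], simp,
          intro continuous_intros continuous_on_subset[OF c(1)] continuous_on_subset[OF c(2)])
        auto
  qed (use d(2) in \<open>simp add: D_def\<close>)
  show "integral\<^sup>L lborel_Om D = 0"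
  proof (rule integral_R_derivative_eq_0[OF cD, where h = "\<lambda>x. hardy_weight (fst x) * (\<psi> x)\<^sup>2"])
    fix R t
    show "((\<lambda>r. hardy_weight (fst (r, t)) * (\<psi> (r, t))\<^sup>2) has_real_derivative D (R, t)) (at R)"
    proof (cases "1 < R \<and> R < 7")
      case True
      then show ?thesis
        using hardy_weight_has_real_derivative[of R] test_has_real_derivative(1)[OF psi, of t R]
        by (auto intro!: derivative_eq_intros simp: D_def power2_eq_square algebra_simps)
    next
      case False
      let ?S = "{r. r < 1 + d} \<union> {r. 7 - d < r}"
      have "open ?S" "R \<in> ?S" "\<And>r. r \<in> ?S \<Longrightarrow> 0 = hardy_weight r * (\<psi> (r, t))\<^sup>2"
        using False d by (auto intro!: open_Un open_Collect_less continuous_intros)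
      then have "((\<lambda>r. hardy_weight r * (\<psi> (r, t))\<^sup>2) has_real_derivative 0) (at R)"
        using has_field_derivative_transform_within_open[of "\<lambda>r. 0" 0 R ?S] by simp
      moreover have "D (R, t) = 0" using False by (auto simp: D_def)
      ultimately show ?thesis by simp
    qed
  qed (simp_all add: test_boundary_zero[OF psi])
qed

lemma continuous_on_hardy_terms:
  assumes psi: "test \<psi>"
  shows "continuous_on UNIV (\<lambda>x. (dR \<psi> x + hardy_weight (fst x) * \<psi> x)\<^sup>2)"
    "continuous_on UNIV (\<lambda>x. (\<psi> x)\<^sup>2 / (rho (fst x))\<^sup>2)"
proof -
  obtain d where d: "d > 0"
    "\<And>x. fst x \<le> 1 + d \<or> 7 - d \<le> fst x \<Longrightarrow> \<psi> x = 0 \<and> dR \<psi> x = 0 \<and> dT \<psi> x = 0"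
    using test_vanishes_near_boundary[OF psi] by blast
  have c: "continuous_on UNIV \<psi>" "continuous_on UNIV (dR \<psi>)"
    using continuous_on_test[OF psi] by auto
  show "continuous_on UNIV (\<lambda>x. (dR \<psi> x + hardy_weight (fst x) * \<psi> x)\<^sup>2)"
  proof (rule continuous_on_vanishing_near_boundary[OF _ d(1)])
    show "continuous_on {x. 1 < fst x \<and> fst x < 7} (\<lambda>x. (dR \<psi> x + hardy_weight (fst x) * \<psi> x)\<^sup>2)"
      unfolding hardy_weight_def
      by (intro continuous_intros continuous_on_subset[OF c(1)] continuous_on_subset[OF c(2)]) auto
  qed (use d(2) in simp)
  show "continuous_on UNIV (\<lambda>x. (\<psi> x)\<^sup>2 / (rho (fst x))\<^sup>2)"
  proof (rule continuous_on_vanishing_near_boundary[OF _ d(1)])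
    show "continuous_on {x. 1 < fst x \<and> fst x < 7} (\<lambda>x. (\<psi> x)\<^sup>2 / (rho (fst x))\<^sup>2)"
      unfolding rho_def by (intro continuous_intros continuous_on_subset[OF c(1)]) auto
  qed (use d(2) in simp)
qed

lemma hardy_inequality:
  assumes psi: "test \<psi>"
  shows "integrable lborel_Om (\<lambda>x. (\<psi> x)\<^sup>2 / (rho (fst x))\<^sup>2)"
    "integral\<^sup>L lborel_Om (\<lambda>x. (\<psi> x)\<^sup>2 / (rho (fst x))\<^sup>2) \<le> 4 * integral\<^sup>L lborel_Om (\<lambda>x. (dR \<psi> x)\<^sup>2)"
proof -
  define D where "D x = (if 1 < fst x \<and> fst x < 7
    then hardy_weight' (fst x) * (\<psi> x)\<^sup>2 + 2 * hardy_weight (fst x) * \<psi> x * dR \<psi> x else 0)" for x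
  define E where "E x = (dR \<psi> x + hardy_weight (fst x) * \<psi> x)\<^sup>2" for x
  define Q where "Q x = (\<psi> x)\<^sup>2 / (rho (fst x))\<^sup>2" for x
  note D = hardy_remainder[OF psi, folded D_def[abs_def]]
  have int: "integrable lborel_Om D" "integrable lborel_Om E" "integrable lborel_Om Q"
    "integrable lborel_Om (\<lambda>x. (dR \<psi> x)\<^sup>2)"
    using D(1) continuous_on_hardy_terms[OF psi] continuous_on_test[OF psi]
    unfolding E_def[abs_def] Q_def[abs_def]
    by (auto intro!: integrable_lborel_Om_continuous continuous_intros)
  then show "integrable lborel_Om (\<lambda>x. (\<psi> x)\<^sup>2 / (rho (fst x))\<^sup>2)"
    by (simp add: Q_def[abs_def])
  have "integral\<^sup>L lborel_Om (\<lambda>x. (dR \<psi> x)\<^sup>2 - Q x / 4) = integral\<^sup>L lborel_Om (\<lambda>x. E x - D x)"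
  proof (rule Bochner_Integration.integral_cong[OF refl])
    fix x assume "x \<in> space lborel_Om"
    then show "(dR \<psi> x)\<^sup>2 - Q x / 4 = E x - D x"
      using fst_Om_bounds hardy_identity[of "fst x" "dR \<psi> x" "\<psi> x"]
      by (simp add: Q_def E_def D_def)
  qed
  also have "\<dots> = integral\<^sup>L lborel_Om E"
    using int D(2) by simp
  also have "\<dots> \<ge> 0"
    by (simp add: E_def)
  finally have "0 \<le> integral\<^sup>L lborel_Om (\<lambda>x. (dR \<psi> x)\<^sup>2 - Q x / 4)" .
  also have "\<dots> = integral\<^sup>L lborel_Om (\<lambda>x. (dR \<psi> x)\<^sup>2) - integral\<^sup>L lborel_Om Q / 4"
    using int by simp
  finally show "integral\<^sup>L lborel_Om (\<lambda>x. (\<psi> x)\<^sup>2 / (rho (fst x))\<^sup>2) \<le>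
      4 * integral\<^sup>L lborel_Om (\<lambda>x. (dR \<psi> x)\<^sup>2)"
    by (simp add: Q_def[abs_def])
qed

section \<open>The energy form\<close>

text \<open>\<open>bform x\<close> is the integrand of the bilinear form of the weak formulation at the point
  \<open>x\<close>, acting on triples \<open>(W, \<partial>\<^sub>R W, \<partial>\<^sub>\<theta> W)\<close>; \<open>c\<close> plays the role of \<open>(m - 1) (m - 2)\<close>.\<close>

locale energy_form =
  fixes a c :: real
  assumes a_ge: "a \<ge> 4" and c_pos: "c > 0"
begin

definition bform :: "real \<times> real \<Rightarrow> real \<times> real \<times> real \<Rightarrow> real \<times> real \<times> real \<Rightarrow> real" where
  "bform x u v = (fst (snd u) * fst (snd v) + snd (snd u) * snd (snd v) / (fst x + a - 4)\<^sup>2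
       + c / (rho (fst x))\<^sup>2 * fst u * fst v) * (fst x + a - 4)"

abbreviation qform :: "real \<times> real \<Rightarrow> real \<times> real \<times> real \<Rightarrow> real" where
  "qform x v \<equiv> bform x v v"

definition Kcoer :: real where
  "Kcoer = a + 4 + 9 / (4 * c)"

lemma Kcoer_pos: "Kcoer > 0"
  unfolding Kcoer_def using a_ge c_pos by (simp add: add_pos_nonneg)

lemma bform_sym: "bform x u v = bform x v u"
  unfolding bform_def by (simp add: algebra_simps)

lemma bform_add_left: "bform x (u + u') v = bform x u v + bform x u' v"
  unfolding bform_def by (simp add: algebra_simps add_divide_distrib)

lemma bform_diff_left: "bform x (u - u') v = bform x u v - bform x u' v"
  unfolding bform_def by (simp add: algebra_simps diff_divide_distrib)

lemma bform_scaleR_left: "bform x (r *\<^sub>R u) v = r * bform x u v"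
  unfolding bform_def by (simp add: algebra_simps)

lemma bform_add_right: "bform x v (u + u') = bform x v u + bform x v u'"
  using bform_add_left bform_sym by metis

lemma bform_diff_right: "bform x v (u - u') = bform x v u - bform x v u'"
  using bform_diff_left bform_sym by metis

lemma bform_scaleR_right: "bform x v (r *\<^sub>R u) = r * bform x v u"
  using bform_scaleR_left bform_sym by metis

lemmas bform_bilinear = bform_add_left bform_diff_left bform_scaleR_left
  bform_add_right bform_diff_right bform_scaleR_right

lemma qform_scaleR: "qform x (r *\<^sub>R u) = r\<^sup>2 * qform x u"
  by (simp add: bform_bilinear power2_eq_square)

lemma qform_expand: "qform x (r *\<^sub>R u + v) = r\<^sup>2 * qform x u + 2 * r * bform x u v + qform x v"
  by (simp add: bform_bilinear bform_sym[of x v u] power2_eq_square algebra_simps)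

lemma qform_parallelogram:
  "qform x (u - v) = 2 * qform x u + 2 * qform x v - 4 * qform x ((1 / 2) *\<^sub>R (u + v))"
  by (simp add: bform_bilinear bform_sym[of x v u]) (simp add: field_simps)

lemma continuous_on_qform: "continuous_on UNIV (qform x)"
  unfolding bform_def divide_inverse by (intro continuous_intros)

lemma borel_measurable_bform [measurable]:
  assumes "U \<in> borel_measurable lborel_Om" "V \<in> borel_measurable lborel_Om"
  shows "(\<lambda>x. bform x (U x) (V x)) \<in> borel_measurable lborel_Om"
proof -
  note [measurable] = borel_measurable_triple_components[OF assms(1)]
    borel_measurable_triple_components[OF assms(2)]
  show ?thesis unfolding bform_def by measurable
qed

context
  fixes x :: "real \<times> real"
  assumes x: "x \<in> Om"
begin

lemma weight_bounds: "1 \<le> fst x + a - 4" "fst x + a - 4 \<le> a + 3"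
  using fst_Om_bounds[OF x] a_ge by auto

lemma qform_eq:
  "qform x (v1, v2, v3) = v2\<^sup>2 * (fst x + a - 4) + v3\<^sup>2 / (fst x + a - 4)
     + c * v1\<^sup>2 / (rho (fst x))\<^sup>2 * (fst x + a - 4)"
proof -
  define w where "w = fst x + a - 4"
  have "1 \<le> w" using weight_bounds by (simp add: w_def)
  then show ?thesis
    unfolding bform_def w_def[symmetric] by (simp add: power2_eq_square field_simps)
qed

lemma qform_nonneg: "0 \<le> qform x v"
  using weight_bounds c_pos by (cases v) (simp add: qform_eq)

text \<open>Cauchy--Schwarz for the positive semidefinite form: both \<open>qform x (\<pm>l u + v)\<close>
  are nonnegative.\<close>

lemma abs_bform_le:
  assumes "l > 0"
  shows "\<bar>bform x u v\<bar> \<le> (l * qform x u + qform x v / l) / 2"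
proof -
  have "0 \<le> l\<^sup>2 * qform x u + 2 * l * bform x u v + qform x v"
    "0 \<le> l\<^sup>2 * qform x u - 2 * l * bform x u v + qform x v"
    using qform_nonneg[of "l *\<^sub>R u + v"] qform_nonneg[of "(- l) *\<^sub>R u + v"]
    unfolding qform_expand by simp_all
  then have "\<bar>bform x u v\<bar> * (2 * l) \<le> l\<^sup>2 * qform x u + qform x v"
    using assms by (cases "bform x u v \<ge> 0") (auto simp: algebra_simps)
  then show ?thesis
    using assms by (simp add: field_simps power2_eq_square)
qed

lemma qform_add_le: "qform x (u + v) \<le> 2 * qform x u + 2 * qform x v"
proof -
  have "qform x (u + v) + qform x (u - v) = 2 * qform x u + 2 * qform x v"
    by (simp add: bform_bilinear bform_sym[of x v u])
  then show ?thesis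
    using qform_nonneg[of "u - v"] by linarith
qed

lemma norm_sq_le_qform: "(norm v)\<^sup>2 \<le> Kcoer * qform x v"
proof -
  obtain v1 v2 v3 where v: "v = (v1, v2, v3)" by (cases v) auto
  define w where "w = fst x + a - 4"
  define r where "r = rho (fst x)"
  have w: "1 \<le> w" "w \<le> a + 3" using weight_bounds by (auto simp: w_def)
  have "0 < r" "r \<le> 3 / 2"
    using rho_pos_Om[OF x] rho_le by (auto simp: r_def)
  then have r: "0 < r" "r\<^sup>2 \<le> 9 / 4"
    using power_mono[of r "3 / 2" 2] by (simp_all add: power2_eq_square)
  have "v2\<^sup>2 \<le> v2\<^sup>2 * w"
    using w by (simp add: mult_le_cancel_left1)
  moreover have "v3\<^sup>2 \<le> (a + 3) * (v3\<^sup>2 / w)"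
    using w mult_left_mono[OF w(2), of "v3\<^sup>2 / w"] by (simp add: mult.commute)
  moreover have "v1\<^sup>2 \<le> 9 / (4 * c) * (c * v1\<^sup>2 / r\<^sup>2 * w)"
  proof -
    have "v1\<^sup>2 * r\<^sup>2 \<le> v1\<^sup>2 * (9 / 4) * w"
      using r w mult_left_mono[OF r(2), of "v1\<^sup>2"] mult_left_mono[OF w(1), of "v1\<^sup>2 * (9 / 4)"]
      by simp
    then show ?thesis
      using r c_pos by (simp add: field_simps)
  qed
  moreover have "v2\<^sup>2 * w \<le> Kcoer * (v2\<^sup>2 * w)" "(a + 3) * (v3\<^sup>2 / w) \<le> Kcoer * (v3\<^sup>2 / w)"
    "9 / (4 * c) * (c * v1\<^sup>2 / r\<^sup>2 * w) \<le> Kcoer * (c * v1\<^sup>2 / r\<^sup>2 * w)"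
  proof -
    have "1 \<le> Kcoer" "a + 3 \<le> Kcoer" "9 / (4 * c) \<le> Kcoer"
      using a_ge c_pos by (auto simp: Kcoer_def)
    moreover have "0 \<le> v2\<^sup>2 * w" "0 \<le> v3\<^sup>2 / w" "0 \<le> c * v1\<^sup>2 / r\<^sup>2 * w"
      using w c_pos by auto
    ultimately show "v2\<^sup>2 * w \<le> Kcoer * (v2\<^sup>2 * w)" "(a + 3) * (v3\<^sup>2 / w) \<le> Kcoer * (v3\<^sup>2 / w)"
      "9 / (4 * c) * (c * v1\<^sup>2 / r\<^sup>2 * w) \<le> Kcoer * (c * v1\<^sup>2 / r\<^sup>2 * w)"
      using mult_right_mono by (metis mult_1)+
  qed
  ultimately have "v1\<^sup>2 + v2\<^sup>2 + v3\<^sup>2 \<le> Kcoer * (v2\<^sup>2 * w + v3\<^sup>2 / w + c * v1\<^sup>2 / r\<^sup>2 * w)"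
    unfolding distrib_left by linarith
  then show ?thesis
    by (simp add: v norm_sq_components qform_eq w_def r_def)
qed

lemma qform_le:
  "qform x v \<le> (a + 3) * ((fst (snd v))\<^sup>2 + (snd (snd v))\<^sup>2 + c * (fst v)\<^sup>2 / (rho (fst x))\<^sup>2)"
proof -
  obtain v1 v2 v3 where v: "v = (v1, v2, v3)" by (cases v) auto
  define w where "w = fst x + a - 4"
  have w: "1 \<le> w" "w \<le> a + 3" using weight_bounds by (auto simp: w_def)
  have "v2\<^sup>2 * w \<le> (a + 3) * v2\<^sup>2"
    using w by (simp add: mult.commute[of _ w] mult_right_mono)
  moreover have "v3\<^sup>2 / w \<le> (a + 3) * v3\<^sup>2"
  proof -
    have "v3\<^sup>2 / w \<le> v3\<^sup>2" using w by (simp add: divide_le_eq mult_le_cancel_left1)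
    also have "\<dots> \<le> (a + 3) * v3\<^sup>2" using a_ge by (simp add: mult_le_cancel_right1)
    finally show ?thesis .
  qed
  moreover have "c * v1\<^sup>2 / (rho (fst x))\<^sup>2 * w \<le> (a + 3) * (c * v1\<^sup>2 / (rho (fst x))\<^sup>2)"
  proof -
    have "0 \<le> c * v1\<^sup>2 / (rho (fst x))\<^sup>2" using c_pos by simp
    from mult_left_mono[OF w(2) this] show ?thesis by (metis mult.commute)
  qed
  ultimately show ?thesis
    by (simp add: v qform_eq w_def[symmetric] distrib_left)
qed

end

end

section \<open>Square-integrable fields and the energy space\<close>

lemma abs_mult_le_AM_GM:
  fixes p q l :: real
  assumes "l > 0"
  shows "\<bar>p * q\<bar> \<le> (l * p\<^sup>2 + q\<^sup>2 / l) / 2"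
proof -
  have "0 \<le> (l * \<bar>p\<bar> - \<bar>q\<bar>)\<^sup>2" by simp
  then have "2 * l * \<bar>p * q\<bar> \<le> l\<^sup>2 * p\<^sup>2 + q\<^sup>2"
    by (simp add: power2_eq_square algebra_simps abs_mult)
  then show ?thesis
    using assms by (simp add: field_simps power2_eq_square)
qed

lemma tendsto_zero_by_AM_GM_bound:
  fixes x B :: "nat \<Rightarrow> real"
  assumes "A \<ge> 0" "B \<longlonglongrightarrow> 0" "\<And>l n. l > 0 \<Longrightarrow> \<bar>x n\<bar> \<le> (l * A + B n / l) / 2"
  shows "x \<longlonglongrightarrow> 0"
proof (rule LIMSEQ_I)
  fix e :: real assume e: "e > 0"
  define l where "l = e / (A + 1)"
  have l: "l > 0" using e assms(1) by (simp add: l_def)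
  have "l * A = e * (A / (A + 1))" by (simp add: l_def)
  also have "\<dots> < e * 1" using e assms(1) by (intro mult_strict_left_mono) auto
  finally have lA: "l * A < e" by simp
  obtain N where N: "\<And>n. n \<ge> N \<Longrightarrow> \<bar>B n\<bar> < e * l"
    using LIMSEQ_D[OF assms(2)] e l by (metis mult_pos_pos real_norm_def diff_zero)
  have "\<bar>x n\<bar> < e" if "n \<ge> N" for n
  proof -
    have "B n / l < e" using N[OF that] l by (simp add: divide_less_eq abs_less_iff)
    then show ?thesis using assms(3)[OF l, of n] lA by simp
  qed
  then show "\<exists>N. \<forall>n\<ge>N. norm (x n - 0) < e" by auto
qed

definition L2_field :: "(real \<times> real \<Rightarrow> real \<times> real \<times> real) \<Rightarrow> bool" where
  "L2_field U \<longleftrightarrow> U \<in> borel_measurable lborel_Om \<and> integrable lborel_Om (\<lambda>x. (norm (U x))\<^sup>2)"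

lemma L2_field_diff:
  assumes U: "L2_field U" and V: "L2_field V"
  shows "L2_field (\<lambda>x. U x - V x)"
    "integral\<^sup>L lborel_Om (\<lambda>x. (norm (U x - V x))\<^sup>2) \<le>
       2 * integral\<^sup>L lborel_Om (\<lambda>x. (norm (U x))\<^sup>2) + 2 * integral\<^sup>L lborel_Om (\<lambda>x. (norm (V x))\<^sup>2)"
proof -
  have pointwise: "(norm (u - v))\<^sup>2 \<le> 2 * (norm u)\<^sup>2 + 2 * (norm v)\<^sup>2" for u v :: "real \<times> real \<times> real"
  proof -
    have "(norm (u - v))\<^sup>2 \<le> (norm u + norm v)\<^sup>2"
      using norm_triangle_ineq4[of u v] by (intro power_mono) auto
    also have "\<dots> \<le> 2 * (norm u)\<^sup>2 + 2 * (norm v)\<^sup>2"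
      using zero_le_power2[of "norm u - norm v"] by (simp add: power2_eq_square algebra_simps)
    finally show ?thesis .
  qed
  have m: "(\<lambda>x. U x - V x) \<in> borel_measurable lborel_Om"
    using U V unfolding L2_field_def by (intro borel_measurable_diff) auto
  have i: "integrable lborel_Om (\<lambda>x. (norm (U x - V x))\<^sup>2)"
  proof (rule integrable_lborel_Om_dominated)
    show "integrable lborel_Om (\<lambda>x. 2 * (norm (U x))\<^sup>2 + 2 * (norm (V x))\<^sup>2)"
      using U V by (simp add: L2_field_def)
    show "(\<lambda>x. (norm (U x - V x))\<^sup>2) \<in> borel_measurable lborel_Om"
      using m by measurable
  qed (simp add: pointwise)
  then show "L2_field (\<lambda>x. U x - V x)"
    using m by (simp add: L2_field_def)
  have "integral\<^sup>L lborel_Om (\<lambda>x. (norm (U x - V x))\<^sup>2) \<le>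
      integral\<^sup>L lborel_Om (\<lambda>x. 2 * (norm (U x))\<^sup>2 + 2 * (norm (V x))\<^sup>2)"
    using i U V pointwise by (intro integral_mono) (auto simp: L2_field_def)
  then show "integral\<^sup>L lborel_Om (\<lambda>x. (norm (U x - V x))\<^sup>2) \<le>
      2 * integral\<^sup>L lborel_Om (\<lambda>x. (norm (U x))\<^sup>2) + 2 * integral\<^sup>L lborel_Om (\<lambda>x. (norm (V x))\<^sup>2)"
    using U V by (simp add: L2_field_def)
qed

lemma L2_field_triangle:
  assumes "L2_field U" "L2_field V" "L2_field W"
  shows "integral\<^sup>L lborel_Om (\<lambda>x. (norm (U x - W x))\<^sup>2) \<le>
    2 * integral\<^sup>L lborel_Om (\<lambda>x. (norm (U x - V x))\<^sup>2) + 2 * integral\<^sup>L lborel_Om (\<lambda>x. (norm (W x - V x))\<^sup>2)"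
  using L2_field_diff(2)[OF L2_field_diff(1)[OF assms(1,2)] L2_field_diff(1)[OF assms(3,2)]]
  by simp

lemma L2_field_jet: "test f \<Longrightarrow> L2_field (jet f)"
  unfolding L2_field_def using continuous_on_jet[of f]
  by (auto intro!: borel_measurable_lborel_Om_continuous integrable_lborel_Om_continuous
      continuous_intros)

lemma L2_field_components:
  assumes "L2_field U"
  shows "L2 (\<lambda>x. fst (U x))" "L2 (\<lambda>x. fst (snd (U x)))" "L2 (\<lambda>x. snd (snd (U x)))"
proof -
  have i: "integrable lborel_Om (\<lambda>x. (norm (U x))\<^sup>2)"
    using assms by (simp add: L2_field_def)
  note m = borel_measurable_triple_components[of U lborel_Om]
  have "L2 f" if f: "f \<in> borel_measurable lborel_Om" and le: "\<And>x. (f x)\<^sup>2 \<le> (norm (U x))\<^sup>2" for f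
  proof -
    have "integrable lborel_Om (\<lambda>x. (f x)\<^sup>2)"
      using f le by (intro integrable_lborel_Om_dominated[OF i]) auto
    then show ?thesis using f by (simp add: L2_iff)
  qed
  then show "L2 (\<lambda>x. fst (U x))" "L2 (\<lambda>x. fst (snd (U x)))" "L2 (\<lambda>x. snd (snd (U x)))"
    using assms m by (simp_all add: L2_field_def norm_sq_components)
qed

lemma L2_field_triple:
  assumes "L2 u" "L2 v" "L2 w"
  shows "L2_field (triple u v w)"
proof -
  have "triple u v w \<in> borel_measurable lborel_Om"
    using assms unfolding triple_def L2_iff by (intro borel_measurable_Pair) auto
  moreover have "integrable lborel_Om (\<lambda>x. (norm (triple u v w x))\<^sup>2)"
    using assms unfolding norm_triple_sq L2_iff by simp
  ultimately show ?thesis by (simp add: L2_field_def)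
qed

context energy_form
begin

definition finite_energy :: "(real \<times> real \<Rightarrow> real \<times> real \<times> real) \<Rightarrow> bool" where
  "finite_energy U \<longleftrightarrow>
     U \<in> borel_measurable lborel_Om \<and> integrable lborel_Om (\<lambda>x. qform x (U x))"

definition energy :: "(real \<times> real \<Rightarrow> real \<times> real \<times> real) \<Rightarrow> real" where
  "energy U = integral\<^sup>L lborel_Om (\<lambda>x. qform x (U x))"

definition energy_inner ::
  "(real \<times> real \<Rightarrow> real \<times> real \<times> real) \<Rightarrow> (real \<times> real \<Rightarrow> real \<times> real \<times> real) \<Rightarrow> real" where
  "energy_inner U V = integral\<^sup>L lborel_Om (\<lambda>x. bform x (U x) (V x))"

lemma energy_nonneg: "0 \<le> energy U"
  unfolding energy_def by (rule Bochner_Integration.integral_nonneg) (auto intro: qform_nonneg)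

lemma energy_inner_sym: "energy_inner U V = energy_inner V U"
  unfolding energy_inner_def by (simp add: bform_sym)

lemma energy_inner_self: "energy_inner U U = energy U"
  unfolding energy_inner_def energy_def ..

lemma finite_energy_linear_combination:
  assumes U: "finite_energy U" and V: "finite_energy V"
  shows "finite_energy (\<lambda>x. r *\<^sub>R U x + s *\<^sub>R V x)"
proof -
  have "U \<in> borel_measurable lborel_Om" "V \<in> borel_measurable lborel_Om"
    using U V by (simp_all add: finite_energy_def)
  then have m: "(\<lambda>x. r *\<^sub>R U x + s *\<^sub>R V x) \<in> borel_measurable lborel_Om"
    by measurable
  have "integrable lborel_Om (\<lambda>x. qform x (r *\<^sub>R U x + s *\<^sub>R V x))"
  proof (rule integrable_lborel_Om_dominated)
    show "integrable lborel_Om (\<lambda>x. 2 * (r\<^sup>2 * qform x (U x)) + 2 * (s\<^sup>2 * qform x (V x)))"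
      using U V by (simp add: finite_energy_def)
    show "(\<lambda>x. qform x (r *\<^sub>R U x + s *\<^sub>R V x)) \<in> borel_measurable lborel_Om"
      by (rule borel_measurable_bform[OF m m])
    show "\<bar>qform x (r *\<^sub>R U x + s *\<^sub>R V x)\<bar> \<le> 2 * (r\<^sup>2 * qform x (U x)) + 2 * (s\<^sup>2 * qform x (V x))"
      if "x \<in> Om" for x
      using qform_add_le[OF that, of "r *\<^sub>R U x" "s *\<^sub>R V x"] qform_nonneg[OF that]
      by (simp add: qform_scaleR)
  qed
  then show ?thesis using m by (simp add: finite_energy_def)
qed

lemma finite_energy_diff:
  "finite_energy U \<Longrightarrow> finite_energy V \<Longrightarrow> finite_energy (\<lambda>x. U x - V x)"
  using finite_energy_linear_combination[of U V 1 "-1"] by simp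

lemma finite_energy_cong:
  assumes "finite_energy U" "\<And>x. x \<in> Om \<Longrightarrow> U' x = U x"
  shows "finite_energy U'"
proof -
  have "U' \<in> borel_measurable lborel_Om"
    using assms measurable_cong[of lborel_Om U' U] by (simp add: finite_energy_def)
  moreover have "integrable lborel_Om (\<lambda>x. qform x (U' x))"
    using assms Bochner_Integration.integrable_cong[of lborel_Om lborel_Om "\<lambda>x. qform x (U' x)"
        "\<lambda>x. qform x (U x)"]
    by (simp add: finite_energy_def)
  ultimately show ?thesis by (simp add: finite_energy_def)
qed

lemma integrable_bform:
  assumes U: "finite_energy U" and V: "finite_energy V"
  shows "integrable lborel_Om (\<lambda>x. bform x (U x) (V x))"
proof (rule integrable_lborel_Om_dominated)
  show "integrable lborel_Om (\<lambda>x. (1 * qform x (U x) + qform x (V x) / 1) / 2)"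
    using U V by (simp add: finite_energy_def)
  show "(\<lambda>x. bform x (U x) (V x)) \<in> borel_measurable lborel_Om"
    using U V by (intro borel_measurable_bform) (simp_all add: finite_energy_def)
qed (rule abs_bform_le, simp_all)

lemma abs_energy_inner_le:
  assumes U: "finite_energy U" and V: "finite_energy V" and l: "l > 0"
  shows "\<bar>energy_inner U V\<bar> \<le> (l * energy U + energy V / l) / 2"
proof -
  have "\<bar>energy_inner U V\<bar> \<le> integral\<^sup>L lborel_Om (\<lambda>x. \<bar>bform x (U x) (V x)\<bar>)"
    unfolding energy_inner_def by (rule integral_abs_bound)
  also have "\<dots> \<le> integral\<^sup>L lborel_Om (\<lambda>x. (l * qform x (U x) + qform x (V x) / l) / 2)"
    using integrable_bform[OF U V] U V abs_bform_le[OF _ l]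
    by (intro integral_mono) (simp_all add: finite_energy_def)
  also have "\<dots> = (l * energy U + energy V / l) / 2"
    using U V by (simp add: finite_energy_def energy_def)
  finally show ?thesis .
qed

lemma energy_expand:
  assumes U: "finite_energy U" and V: "finite_energy V"
  shows "energy (\<lambda>x. r *\<^sub>R U x + V x) = r\<^sup>2 * energy U + 2 * r * energy_inner U V + energy V"
  using U V integrable_bform[OF U V]
  by (simp add: energy_def energy_inner_def qform_expand finite_energy_def)

lemma energy_inner_diff_right:
  assumes "finite_energy U" "finite_energy V" "finite_energy W"
  shows "energy_inner U (\<lambda>x. V x - W x) = energy_inner U V - energy_inner U W"
  using integrable_bform[OF assms(1,2)] integrable_bform[OF assms(1,3)]
  by (simp add: energy_inner_def bform_diff_right)

lemma energy_inner_tendsto_zero: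
  assumes V: "finite_energy V" and D: "\<And>n. finite_energy (D n)"
    and E: "(\<lambda>n. energy (D n)) \<longlonglongrightarrow> 0"
  shows "(\<lambda>n. energy_inner V (D n)) \<longlonglongrightarrow> 0"
  using energy_nonneg E abs_energy_inner_le[OF V D] by (rule tendsto_zero_by_AM_GM_bound)

lemma finite_energy_imp_L2_field:
  assumes U: "finite_energy U"
  shows "L2_field U" "integral\<^sup>L lborel_Om (\<lambda>x. (norm (U x))\<^sup>2) \<le> Kcoer * energy U"
proof -
  have i: "integrable lborel_Om (\<lambda>x. (norm (U x))\<^sup>2)"
  proof (rule integrable_lborel_Om_dominated)
    show "integrable lborel_Om (\<lambda>x. Kcoer * qform x (U x))"
      using U by (simp add: finite_energy_def)
    show "(\<lambda>x. (norm (U x))\<^sup>2) \<in> borel_measurable lborel_Om"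
    proof -
      have "U \<in> borel_measurable lborel_Om" using U by (simp add: finite_energy_def)
      then show ?thesis by measurable
    qed
  qed (simp add: norm_sq_le_qform)
  then show "L2_field U"
    using U by (simp add: L2_field_def finite_energy_def)
  have "integral\<^sup>L lborel_Om (\<lambda>x. (norm (U x))\<^sup>2) \<le> integral\<^sup>L lborel_Om (\<lambda>x. Kcoer * qform x (U x))"
    using i U by (intro integral_mono) (auto simp: finite_energy_def intro: norm_sq_le_qform)
  then show "integral\<^sup>L lborel_Om (\<lambda>x. (norm (U x))\<^sup>2) \<le> Kcoer * energy U"
    by (simp add: energy_def)
qed

lemma L2_tendsto_zero_of_energy:
  assumes D: "\<And>n. finite_energy (D n)" and E: "(\<lambda>n. energy (D n)) \<longlonglongrightarrow> 0"
  shows "(\<lambda>n. integral\<^sup>L lborel_Om (\<lambda>x. (norm (D n x))\<^sup>2)) \<longlonglongrightarrow> 0"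
proof (rule tendsto_sandwich[of "\<lambda>n. 0" _ _ "\<lambda>n. Kcoer * energy (D n)"])
  show "(\<lambda>n. Kcoer * energy (D n)) \<longlonglongrightarrow> 0"
    using tendsto_mult_right_zero[OF E] by simp
qed (use finite_energy_imp_L2_field(2)[OF D] in auto)

end

subsection \<open>Completeness of the energy space\<close>

context energy_form
begin

lemma finite_energy_integrable_norm:
  assumes U: "finite_energy U" and l: "l > 0"
  shows "integrable lborel_Om U"
    "integral\<^sup>L lborel_Om (\<lambda>x. norm (U x)) \<le>
       l / 2 * measure lborel_Om Om + Kcoer * energy U / (2 * l)"
proof -
  let ?g = "\<lambda>x. l / 2 + Kcoer * qform x (U x) / (2 * l)"
  have m: "U \<in> borel_measurable lborel_Om" and iQ: "integrable lborel_Om (\<lambda>x. qform x (U x))"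
    using U by (simp_all add: finite_energy_def)
  have g: "integrable lborel_Om ?g"
    using iQ by simp
  have le: "norm (U x) \<le> ?g x" if "x \<in> Om" for x
  proof -
    have "norm (U x) \<le> (l * 1\<^sup>2 + (norm (U x))\<^sup>2 / l) / 2"
      using abs_mult_le_AM_GM[OF l, of 1 "norm (U x)"] by simp
    also have "\<dots> \<le> ?g x"
      using norm_sq_le_qform[OF that, of "U x"] l by (simp add: divide_right_mono)
    finally show ?thesis .
  qed
  show iU: "integrable lborel_Om U"
    using g m
  proof (rule Bochner_Integration.integrable_bound)
    show "AE x in lborel_Om. norm (U x) \<le> norm (?g x)"
      using le by (intro AE_I2) (force intro: order_trans[OF _ abs_ge_self])
  qed
  have "integral\<^sup>L lborel_Om (\<lambda>x. norm (U x)) \<le> integral\<^sup>L lborel_Om ?g"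
    using iU g le by (intro integral_mono) auto
  also have "\<dots> = l / 2 * measure lborel_Om Om + Kcoer * energy U / (2 * l)"
    using iQ by (simp add: energy_def)
  finally show "integral\<^sup>L lborel_Om (\<lambda>x. norm (U x)) \<le>
      l / 2 * measure lborel_Om Om + Kcoer * energy U / (2 * l)" .
qed

lemma energy_Cauchy_imp_L1_Cauchy:
  assumes fin: "\<And>n. finite_energy (\<Psi> n)"
    and Cauchy: "\<And>e. e > 0 \<Longrightarrow> \<exists>N. \<forall>n\<ge>N. \<forall>k\<ge>N. energy (\<lambda>x. \<Psi> n x - \<Psi> k x) < e"
    and e: "e > 0"
  shows "\<exists>N. \<forall>i\<ge>N. \<forall>j\<ge>N. integral\<^sup>L lborel_Om (\<lambda>x. norm (\<Psi> i x - \<Psi> j x)) < e"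
proof -
  define \<mu> where "\<mu> = measure lborel_Om Om"
  define l where "l = e / (\<mu> + 1)"
  have \<mu>: "\<mu> \<ge> 0" by (simp add: \<mu>_def)
  then have l: "l > 0" using e by (simp add: l_def)
  have "l * \<mu> = e * (\<mu> / (\<mu> + 1))" by (simp add: l_def)
  also have "\<dots> < e * 1" using e \<mu> by (intro mult_strict_left_mono) auto
  finally have l\<mu>: "l / 2 * \<mu> < e / 2" by simp
  obtain N where N: "\<And>n k. n \<ge> N \<Longrightarrow> k \<ge> N \<Longrightarrow> energy (\<lambda>x. \<Psi> n x - \<Psi> k x) < e * l / Kcoer"
    using Cauchy[of "e * l / Kcoer"] e l Kcoer_pos by auto
  have "integral\<^sup>L lborel_Om (\<lambda>x. norm (\<Psi> i x - \<Psi> j x)) < e" if "N \<le> i" "N \<le> j" for i j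
  proof -
    have "integral\<^sup>L lborel_Om (\<lambda>x. norm (\<Psi> i x - \<Psi> j x)) \<le>
        l / 2 * \<mu> + Kcoer * energy (\<lambda>x. \<Psi> i x - \<Psi> j x) / (2 * l)"
      unfolding \<mu>_def by (rule finite_energy_integrable_norm(2)[OF finite_energy_diff[OF fin fin] l])
    also have "Kcoer * energy (\<lambda>x. \<Psi> i x - \<Psi> j x) / (2 * l) < Kcoer * (e * l / Kcoer) / (2 * l)"
      using N[OF that] Kcoer_pos l by (intro divide_strict_right_mono mult_strict_left_mono) auto
    also have "Kcoer * (e * l / Kcoer) / (2 * l) = e / 2"
      using Kcoer_pos l by simp
    finally show ?thesis using l\<mu> by linarith
  qed
  then show ?thesis by blast
qed

lemma nn_integral_qform_le_liminf:
  assumes D: "\<And>i. finite_energy (D i)"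
    and lim: "AE x in lborel_Om. (\<lambda>i. D i x) \<longlonglongrightarrow> D0 x"
  shows "(\<integral>\<^sup>+x. ennreal (qform x (D0 x)) \<partial>lborel_Om) \<le> liminf (\<lambda>i. ennreal (energy (D i)))"
proof -
  let ?q = "\<lambda>i x. ennreal (qform x (D i x))"
  have "AE x in lborel_Om. ennreal (qform x (D0 x)) = liminf (\<lambda>i. ?q i x)"
    using lim
  proof eventually_elim
    case (elim x)
    have "isCont (qform x) (D0 x)"
      using continuous_on_qform[of x] continuous_on_eq_continuous_at open_UNIV by blast
    then have "(\<lambda>i. qform x (D i x)) \<longlonglongrightarrow> qform x (D0 x)"
      using elim by (rule isCont_tendsto_compose)
    then show ?case
      by (intro lim_imp_Liminf[symmetric] tendsto_ennrealI) simp_all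
  qed
  then have "(\<integral>\<^sup>+x. ennreal (qform x (D0 x)) \<partial>lborel_Om) = (\<integral>\<^sup>+x. liminf (\<lambda>i. ?q i x) \<partial>lborel_Om)"
    by (rule nn_integral_cong_AE)
  also have "\<dots> \<le> liminf (\<lambda>i. \<integral>\<^sup>+x. ?q i x \<partial>lborel_Om)"
  proof (rule nn_integral_liminf)
    show "?q i \<in> borel_measurable lborel_Om" for i
      using D[of i] unfolding finite_energy_def
      by (intro measurable_compose[OF borel_measurable_bform] measurable_ennreal) auto
  qed
  also have "(\<lambda>i. \<integral>\<^sup>+x. ?q i x \<partial>lborel_Om) = (\<lambda>i. ennreal (energy (D i)))"
    unfolding energy_def using D
    by (intro ext nn_integral_eq_integral AE_I2) (simp_all add: finite_energy_def qform_nonneg)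
  finally show ?thesis .
qed

text \<open>Fatou's lemma for the energy.\<close>

lemma energy_le_of_AE_limit:
  assumes D: "\<And>i. finite_energy (D i)" and D0: "D0 \<in> borel_measurable lborel_Om"
    and lim: "AE x in lborel_Om. (\<lambda>i. D i x) \<longlonglongrightarrow> D0 x"
    and bound: "\<And>i. i \<ge> N \<Longrightarrow> energy (D i) \<le> e"
  shows "finite_energy D0" "energy D0 \<le> e"
proof -
  have mQ: "(\<lambda>x. qform x (D0 x)) \<in> borel_measurable lborel_Om"
    by (rule borel_measurable_bform[OF D0 D0])
  have nonneg: "AE x in lborel_Om. 0 \<le> qform x (D0 x)"
    by (intro AE_I2) (simp add: qform_nonneg)
  have "(\<integral>\<^sup>+x. ennreal (qform x (D0 x)) \<partial>lborel_Om) \<le> limsup (\<lambda>i. ennreal (energy (D i)))"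
    using nn_integral_qform_le_liminf[OF D lim] Liminf_le_Limsup[of sequentially]
    by (meson order_trans trivial_limit_sequentially)
  also have "\<dots> \<le> ennreal e"
    using bound by (intro Limsup_bounded) (auto simp: eventually_sequentially intro: ennreal_leI)
  finally have nn: "(\<integral>\<^sup>+x. ennreal (qform x (D0 x)) \<partial>lborel_Om) \<le> ennreal e" .
  then have "integrable lborel_Om (\<lambda>x. qform x (D0 x))"
    using mQ nonneg by (intro integrableI_nonneg) (auto simp: top_unique intro: le_less_trans)
  then show "finite_energy D0"
    using D0 by (simp add: finite_energy_def)
  have "energy D0 = enn2real (\<integral>\<^sup>+x. ennreal (qform x (D0 x)) \<partial>lborel_Om)"
    unfolding energy_def using mQ nonneg by (rule integral_eq_nn_integral)
  also have "\<dots> \<le> e"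
    using nn bound[of N] energy_nonneg[of "D N"] by (simp add: enn2real_leI)
  finally show "energy D0 \<le> e" .
qed

lemma finite_energy_complete:
  assumes fin: "\<And>n. finite_energy (\<Psi> n)"
    and Cauchy: "\<And>e. e > 0 \<Longrightarrow> \<exists>N. \<forall>n\<ge>N. \<forall>k\<ge>N. energy (\<lambda>x. \<Psi> n x - \<Psi> k x) < e"
  obtains U where "finite_energy U" "\<And>n. finite_energy (\<lambda>x. \<Psi> n x - U x)"
    "(\<lambda>n. energy (\<lambda>x. \<Psi> n x - U x)) \<longlonglongrightarrow> 0"
proof -
  obtain r where r: "strict_mono r" and AE_Cauchy: "AE x in lborel_Om. Cauchy (\<lambda>i. \<Psi> (r i) x)"
    using cauchy_L1_AE_cauchy_subseq[OF finite_energy_integrable_norm(1)[OF fin, of 1]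
        energy_Cauchy_imp_L1_Cauchy[OF fin Cauchy]] by auto
  define U where "U x = lim (\<lambda>i. \<Psi> (r i) x)" for x
  have mU: "U \<in> borel_measurable lborel_Om"
    unfolding U_def using fin by (intro borel_measurable_lim_metric) (simp add: finite_energy_def)
  have lim: "AE x in lborel_Om. (\<lambda>i. \<Psi> (r i) x) \<longlonglongrightarrow> U x"
    using AE_Cauchy by eventually_elim (simp add: U_def Cauchy_convergent_iff convergent_LIMSEQ_iff)
  have close: "finite_energy (\<lambda>x. \<Psi> n x - U x) \<and> energy (\<lambda>x. \<Psi> n x - U x) \<le> e"
    if "\<And>n k. n \<ge> N \<Longrightarrow> k \<ge> N \<Longrightarrow> energy (\<lambda>x. \<Psi> n x - \<Psi> k x) < e" "n \<ge> N" for e N n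
  proof -
    have "energy (\<lambda>x. \<Psi> n x - \<Psi> (r i) x) \<le> e" if "i \<ge> N" for i
      using that \<open>n \<ge> N\<close> \<open>\<And>n k. n \<ge> N \<Longrightarrow> k \<ge> N \<Longrightarrow> _\<close>[of n "r i"]
        strict_mono_imp_increasing[OF r, of i] by simp
    moreover have "(\<lambda>x. \<Psi> n x - U x) \<in> borel_measurable lborel_Om"
      using fin[of n] mU by (intro borel_measurable_diff) (simp_all add: finite_energy_def)
    moreover have "AE x in lborel_Om. (\<lambda>i. \<Psi> n x - \<Psi> (r i) x) \<longlonglongrightarrow> \<Psi> n x - U x"
      using lim by eventually_elim (intro tendsto_intros)
    ultimately show ?thesis
      using energy_le_of_AE_limit[of "\<lambda>i x. \<Psi> n x - \<Psi> (r i) x"] finite_energy_diff[OF fin fin]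
      by blast
  qed
  obtain N1 where "\<And>n k. n \<ge> N1 \<Longrightarrow> k \<ge> N1 \<Longrightarrow> energy (\<lambda>x. \<Psi> n x - \<Psi> k x) < 1"
    using Cauchy[of 1] by auto
  then have "finite_energy (\<lambda>x. \<Psi> N1 x - U x)"
    using close by blast
  then have finU: "finite_energy U"
    using finite_energy_diff[OF fin[of N1]] by fastforce
  have "(\<lambda>n. energy (\<lambda>x. \<Psi> n x - U x)) \<longlonglongrightarrow> 0"
  proof (rule LIMSEQ_I)
    fix e :: real assume "e > 0"
    then obtain N where "\<And>n k. n \<ge> N \<Longrightarrow> k \<ge> N \<Longrightarrow> energy (\<lambda>x. \<Psi> n x - \<Psi> k x) < e / 2"
      using Cauchy[of "e / 2"] by auto
    then show "\<exists>N. \<forall>n\<ge>N. norm (energy (\<lambda>x. \<Psi> n x - U x) - 0) < e"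
      using close[of N "e / 2"] energy_nonneg \<open>e > 0\<close> by fastforce
  qed
  then show ?thesis
    using that[OF finU] finite_energy_diff[OF fin finU] by blast
qed

end

section \<open>\<open>H\<^sup>1\<^sub>0\<close> inside the energy space\<close>

lemma H1_imp_L2_field: "H1 V VR VT \<Longrightarrow> L2_field (triple V VR VT)"
  unfolding H1_def by (auto intro: L2_field_triple)

lemma norm_jet_minus_triple_sq:
  "(norm (jet f x - triple V VR VT x))\<^sup>2 = (f x - V x)\<^sup>2 + (dR f x - VR x)\<^sup>2 + (dT f x - VT x)\<^sup>2"
  by (simp add: jet_def triple_def norm_sq_components)

lemma H10_iff:
  "H10 V VR VT \<longleftrightarrow> H1 V VR VT \<and> (\<exists>\<phi>. (\<forall>n. test (\<phi> n)) \<and>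
     (\<lambda>n. integral\<^sup>L lborel_Om (\<lambda>x. (norm (jet (\<phi> n) x - triple V VR VT x))\<^sup>2)) \<longlonglongrightarrow> 0)"
  unfolding H10_def integral_lborel_Om norm_jet_minus_triple_sq ..

lemma L2_limit_unique_AE:
  assumes "\<And>n. L2_field (\<Psi> n)" "L2_field U" "L2_field V"
    and "(\<lambda>n. integral\<^sup>L lborel_Om (\<lambda>x. (norm (\<Psi> n x - U x))\<^sup>2)) \<longlonglongrightarrow> 0"
    and "(\<lambda>n. integral\<^sup>L lborel_Om (\<lambda>x. (norm (\<Psi> n x - V x))\<^sup>2)) \<longlonglongrightarrow> 0"
  shows "AE x in lborel_Om. U x = V x"
proof -
  let ?d = "integral\<^sup>L lborel_Om (\<lambda>x. (norm (U x - V x))\<^sup>2)"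
  have "?d \<le> 0"
  proof (rule LIMSEQ_le_const)
    show "(\<lambda>n. 2 * integral\<^sup>L lborel_Om (\<lambda>x. (norm (U x - \<Psi> n x))\<^sup>2)
        + 2 * integral\<^sup>L lborel_Om (\<lambda>x. (norm (V x - \<Psi> n x))\<^sup>2)) \<longlonglongrightarrow> 0"
      using assms(4,5) by (auto simp: norm_minus_commute intro!: tendsto_eq_intros)
    show "\<exists>N. \<forall>n\<ge>N. ?d \<le> 2 * integral\<^sup>L lborel_Om (\<lambda>x. (norm (U x - \<Psi> n x))\<^sup>2)
        + 2 * integral\<^sup>L lborel_Om (\<lambda>x. (norm (V x - \<Psi> n x))\<^sup>2)"
      using L2_field_triangle[OF assms(2,1,3)] by blast
  qed
  moreover have "0 \<le> ?d"
    by (auto intro: Bochner_Integration.integral_nonneg)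
  moreover have "integrable lborel_Om (\<lambda>x. (norm (U x - V x))\<^sup>2)"
    using L2_field_diff(1)[OF assms(2,3)] by (simp add: L2_field_def)
  ultimately have "AE x in lborel_Om. (norm (U x - V x))\<^sup>2 = 0"
    using integral_nonneg_eq_0_iff_AE[of lborel_Om "\<lambda>x. (norm (U x - V x))\<^sup>2"] by auto
  then show ?thesis by eventually_elim simp
qed

context energy_form
begin

definition Khardy :: real where
  "Khardy = (a + 3) * (1 + 4 * c)"

lemma Khardy_pos: "Khardy > 0"
  unfolding Khardy_def using a_ge c_pos by (simp add: add_pos_nonneg)

lemma finite_energy_jet:
  assumes f: "test f"
  shows "finite_energy (jet f)"
    "energy (jet f) \<le> Khardy * integral\<^sup>L lborel_Om (\<lambda>x. (norm (jet f x))\<^sup>2)"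
proof -
  define I where "I g = integral\<^sup>L lborel_Om (\<lambda>x. (g x)\<^sup>2)" for g :: "real \<times> real \<Rightarrow> real"
  define C where "C x = (f x)\<^sup>2 / (rho (fst x))\<^sup>2" for x
  note hardy = hardy_inequality[OF f, folded C_def[abs_def]]
  have m: "jet f \<in> borel_measurable lborel_Om"
    using L2_field_jet[OF f] by (simp add: L2_field_def)
  have i: "integrable lborel_Om (\<lambda>x. (f x)\<^sup>2)" "integrable lborel_Om (\<lambda>x. (dR f x)\<^sup>2)"
    "integrable lborel_Om (\<lambda>x. (dT f x)\<^sup>2)"
    using test_L2[OF f] by (simp_all add: L2_iff)
  let ?g = "\<lambda>x. (a + 3) * ((dR f x)\<^sup>2 + (dT f x)\<^sup>2 + c * C x)"
  have g: "integrable lborel_Om ?g"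
    using i hardy(1) by simp
  have le: "qform x (jet f x) \<le> ?g x" if "x \<in> Om" for x
    using qform_le[OF that, of "jet f x"] by (simp add: jet_def triple_def C_def)
  have iQ: "integrable lborel_Om (\<lambda>x. qform x (jet f x))"
  proof (rule integrable_lborel_Om_dominated[OF g borel_measurable_bform[OF m m]])
    show "\<bar>qform x (jet f x)\<bar> \<le> ?g x" if "x \<in> Om" for x
      using le[OF that] qform_nonneg[OF that] by simp
  qed
  then show "finite_energy (jet f)"
    using m by (simp add: finite_energy_def)
  have "energy (jet f) \<le> integral\<^sup>L lborel_Om ?g"
    unfolding energy_def using iQ g le by (intro integral_mono) auto
  also have "\<dots> = (a + 3) * (I (dR f) + I (dT f) + c * integral\<^sup>L lborel_Om C)"
    using i hardy(1) by (simp add: I_def)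
  also have "\<dots> \<le> (a + 3) * (I (dR f) + I (dT f) + c * (4 * I (dR f)))"
    using hardy(2) c_pos a_ge by (intro mult_left_mono add_left_mono) (auto simp: I_def)
  also have "\<dots> \<le> Khardy * (I f + I (dR f) + I (dT f))"
    using a_ge c_pos Bochner_Integration.integral_nonneg[of lborel_Om "\<lambda>x. (_ x)\<^sup>2"]
    unfolding Khardy_def I_def by (simp add: algebra_simps)
  also have "\<dots> = Khardy * integral\<^sup>L lborel_Om (\<lambda>x. (norm (jet f x))\<^sup>2)"
    using i by (simp add: I_def jet_def norm_triple_sq)
  finally show "energy (jet f) \<le> Khardy * integral\<^sup>L lborel_Om (\<lambda>x. (norm (jet f x))\<^sup>2)" .
qed

lemma energy_Cauchy_of_L2_convergent_jets:
  assumes t: "\<And>n. test (\<phi> n)" and V: "L2_field V"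
    and lim: "(\<lambda>n. integral\<^sup>L lborel_Om (\<lambda>x. (norm (jet (\<phi> n) x - V x))\<^sup>2)) \<longlonglongrightarrow> 0"
    and e: "e > 0"
  shows "\<exists>N. \<forall>n\<ge>N. \<forall>k\<ge>N. energy (\<lambda>x. jet (\<phi> n) x - jet (\<phi> k) x) < e"
proof -
  define s where "s n = integral\<^sup>L lborel_Om (\<lambda>x. (norm (jet (\<phi> n) x - V x))\<^sup>2)" for n
  obtain N where N: "\<And>n. n \<ge> N \<Longrightarrow> s n < e / (4 * Khardy)"
    using LIMSEQ_D[OF lim, of "e / (4 * Khardy)"] e Khardy_pos
    by (auto simp: s_def[abs_def] abs_less_iff)
  have "energy (\<lambda>x. jet (\<phi> n) x - jet (\<phi> k) x) < e" if nk: "N \<le> n" "N \<le> k" for n k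
  proof -
    have jet_diff: "jet (\<lambda>x. 1 * \<phi> n x + (-1) * \<phi> k x) = (\<lambda>x. jet (\<phi> n) x - jet (\<phi> k) x)"
      using jet_linear_combination[OF t t, of 1 n "-1" k] by simp
    have "energy (\<lambda>x. jet (\<phi> n) x - jet (\<phi> k) x) \<le>
        Khardy * integral\<^sup>L lborel_Om (\<lambda>x. (norm (jet (\<phi> n) x - jet (\<phi> k) x))\<^sup>2)"
      using finite_energy_jet(2)[OF test_linear_combination[OF t t, of 1 n "-1" k]]
      unfolding jet_diff .
    also have "\<dots> \<le> Khardy * (2 * s n + 2 * s k)"
      unfolding s_def using L2_field_triangle[OF L2_field_jet[OF t] V L2_field_jet[OF t]] Khardy_pos
      by (intro mult_left_mono) auto
    also have "\<dots> < Khardy * (4 * (e / (4 * Khardy)))"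
      using N[OF nk(1)] N[OF nk(2)] Khardy_pos by (intro mult_strict_left_mono) auto
    finally show ?thesis using Khardy_pos by simp
  qed
  then show ?thesis by blast
qed

lemma finite_energy_AE_cong:
  assumes U: "finite_energy U" and m: "U' \<in> borel_measurable lborel_Om"
    and ae: "AE x in lborel_Om. U x = U' x"
  shows "finite_energy U'" "energy U' = energy U"
proof -
  have mU: "U \<in> borel_measurable lborel_Om" and iU: "integrable lborel_Om (\<lambda>x. qform x (U x))"
    using U by (simp_all add: finite_energy_def)
  have ae': "AE x in lborel_Om. qform x (U x) = qform x (U' x)"
    using ae by eventually_elim simp
  have "integrable lborel_Om (\<lambda>x. qform x (U' x))"
    using iU borel_measurable_bform[OF m m] ae' by (rule integrable_cong_AE_imp)
  then show "finite_energy U'"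
    using m by (simp add: finite_energy_def)
  show "energy U' = energy U"
    unfolding energy_def using borel_measurable_bform[OF m m] borel_measurable_bform[OF mU mU] ae'
    by (intro integral_cong_AE) (auto elim: AE_mp)
qed

lemma H10_in_energy_closure:
  assumes H: "H10 V VR VT"
  shows "finite_energy (triple V VR VT)"
    "\<exists>\<phi>. (\<forall>n. test (\<phi> n)) \<and> (\<lambda>n. energy (\<lambda>x. jet (\<phi> n) x - triple V VR VT x)) \<longlonglongrightarrow> 0"
proof -
  let ?V = "triple V VR VT"
  have LV: "L2_field ?V"
    using H by (simp add: H10_iff H1_imp_L2_field)
  obtain \<phi> where t: "\<And>n. test (\<phi> n)"
    and lim: "(\<lambda>n. integral\<^sup>L lborel_Om (\<lambda>x. (norm (jet (\<phi> n) x - ?V x))\<^sup>2)) \<longlonglongrightarrow> 0"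
    using H unfolding H10_iff by blast
  obtain U where U: "finite_energy U" and D: "\<And>n. finite_energy (\<lambda>x. jet (\<phi> n) x - U x)"
    and limU: "(\<lambda>n. energy (\<lambda>x. jet (\<phi> n) x - U x)) \<longlonglongrightarrow> 0"
    using finite_energy_complete[of "\<lambda>n. jet (\<phi> n)"] finite_energy_jet(1)[OF t]
      energy_Cauchy_of_L2_convergent_jets[OF t LV lim] by blast
  have mV: "?V \<in> borel_measurable lborel_Om"
    using LV by (simp add: L2_field_def)
  have ae: "AE x in lborel_Om. U x = ?V x"
    using L2_field_jet[OF t] finite_energy_imp_L2_field(1)[OF U] LV
      L2_tendsto_zero_of_energy[OF D limU] lim
    by (rule L2_limit_unique_AE)
  show "finite_energy ?V"
    by (rule finite_energy_AE_cong(1)[OF U mV ae])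
  have "energy (\<lambda>x. jet (\<phi> n) x - ?V x) = energy (\<lambda>x. jet (\<phi> n) x - U x)" for n
  proof (rule finite_energy_AE_cong(2)[OF D])
    show "(\<lambda>x. jet (\<phi> n) x - ?V x) \<in> borel_measurable lborel_Om"
      using L2_field_diff(1)[OF L2_field_jet[OF t] LV] by (simp add: L2_field_def)
  qed (use ae in auto)
  then have "(\<lambda>n. energy (\<lambda>x. jet (\<phi> n) x - ?V x)) \<longlonglongrightarrow> 0"
    using limU by simp
  then show "\<exists>\<phi>. (\<forall>n. test (\<phi> n)) \<and> (\<lambda>n. energy (\<lambda>x. jet (\<phi> n) x - ?V x)) \<longlonglongrightarrow> 0"
    using t by blast
qed

end

section \<open>The Dirichlet principle\<close>

lemma linear_coeff_eq_0_if_quadratic_nonneg: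
  fixes g E :: real
  assumes E: "E \<ge> 0" and nonneg: "\<And>t. 0 \<le> t * g + t\<^sup>2 * E / 2"
  shows "g = 0"
proof -
  define t where "t = - g / (E + 1)"
  have E1: "E + 1 \<noteq> 0" using E by simp
  have linear: "t * g * (2 * (E + 1)\<^sup>2) = - (2 * g\<^sup>2 * (E + 1))"
    and quadratic: "t\<^sup>2 * E / 2 * (2 * (E + 1)\<^sup>2) = g\<^sup>2 * E"
    unfolding t_def using E1 by (simp_all add: power2_eq_square)
  have "(t * g + t\<^sup>2 * E / 2) * (2 * (E + 1)\<^sup>2) = - (g\<^sup>2 * (E + 2))"
    unfolding distrib_right linear quadratic by (simp add: algebra_simps)
  moreover have "0 \<le> (t * g + t\<^sup>2 * E / 2) * (2 * (E + 1)\<^sup>2)"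
    using nonneg[of t] by simp
  ultimately have "g\<^sup>2 * (E + 2) \<le> 0" by simp
  then show ?thesis
    using E by (simp add: mult_le_0_iff)
qed

locale dirichlet_problem = energy_form +
  fixes G :: "real \<times> real \<Rightarrow> real"
  assumes L2_G: "L2 G"
begin

definition load :: "(real \<times> real \<Rightarrow> real \<times> real \<times> real) \<Rightarrow> real" where
  "load U = integral\<^sup>L lborel_Om (\<lambda>x. G x * fst (U x))"

definition G_norm_sq :: real where
  "G_norm_sq = integral\<^sup>L lborel_Om (\<lambda>x. (G x)\<^sup>2)"

lemma G_norm_sq_nonneg: "G_norm_sq \<ge> 0"
  unfolding G_norm_sq_def by (auto intro: Bochner_Integration.integral_nonneg)

lemma load_bound_L2:
  assumes U: "L2_field U"
  shows "integrable lborel_Om (\<lambda>x. G x * fst (U x))"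
    "l > 0 \<Longrightarrow> \<bar>load U\<bar> \<le> (l * G_norm_sq + integral\<^sup>L lborel_Om (\<lambda>x. (norm (U x))\<^sup>2) / l) / 2"
proof -
  have mG: "G \<in> borel_measurable lborel_Om" and iG: "integrable lborel_Om (\<lambda>x. (G x)\<^sup>2)"
    using L2_G by (simp_all add: L2_iff)
  have mU: "U \<in> borel_measurable lborel_Om" and iU: "integrable lborel_Om (\<lambda>x. (norm (U x))\<^sup>2)"
    using U by (simp_all add: L2_field_def)
  have le: "\<bar>G x * fst (U x)\<bar> \<le> (l * (G x)\<^sup>2 + (norm (U x))\<^sup>2 / l) / 2" if "l > 0" for x l
  proof -
    have "(fst (U x))\<^sup>2 / l \<le> (norm (U x))\<^sup>2 / l"
      using that by (intro divide_right_mono) (auto simp: norm_sq_components)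
    then show ?thesis
      using abs_mult_le_AM_GM[OF that, of "G x" "fst (U x)"] by simp
  qed
  show i: "integrable lborel_Om (\<lambda>x. G x * fst (U x))"
  proof (rule integrable_lborel_Om_dominated)
    show "integrable lborel_Om (\<lambda>x. (1 * (G x)\<^sup>2 + (norm (U x))\<^sup>2 / 1) / 2)"
      using iG iU by simp
    show "(\<lambda>x. G x * fst (U x)) \<in> borel_measurable lborel_Om"
      using mG borel_measurable_triple_components(1)[OF mU] by (rule borel_measurable_times)
    show "\<bar>G x * fst (U x)\<bar> \<le> (1 * (G x)\<^sup>2 + (norm (U x))\<^sup>2 / 1) / 2" for x
      using le[of 1 x] by simp
  qed
  assume l: "l > 0"
  have "\<bar>load U\<bar> \<le> integral\<^sup>L lborel_Om (\<lambda>x. \<bar>G x * fst (U x)\<bar>)"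
    unfolding load_def by (rule integral_abs_bound)
  also have "\<dots> \<le> integral\<^sup>L lborel_Om (\<lambda>x. (l * (G x)\<^sup>2 + (norm (U x))\<^sup>2 / l) / 2)"
    using i iG iU le[OF l] by (intro integral_mono) auto
  also have "\<dots> = (l * G_norm_sq + integral\<^sup>L lborel_Om (\<lambda>x. (norm (U x))\<^sup>2) / l) / 2"
    using iG iU by (simp add: G_norm_sq_def)
  finally show "\<bar>load U\<bar> \<le> (l * G_norm_sq + integral\<^sup>L lborel_Om (\<lambda>x. (norm (U x))\<^sup>2) / l) / 2" .
qed

lemma load_bound:
  assumes U: "finite_energy U" and l: "l > 0"
  shows "\<bar>load U\<bar> \<le> (l * G_norm_sq + Kcoer * energy U / l) / 2"
proof -
  have "integral\<^sup>L lborel_Om (\<lambda>x. (norm (U x))\<^sup>2) / l \<le> Kcoer * energy U / l"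
    using finite_energy_imp_L2_field(2)[OF U] l by (simp add: divide_right_mono)
  with load_bound_L2(2)[OF finite_energy_imp_L2_field(1)[OF U] l] show ?thesis
    by (rule order_trans[OF _ divide_right_mono[OF add_left_mono]]) simp
qed

lemma load_linear_combination:
  assumes "L2_field U" "L2_field V"
  shows "load (\<lambda>x. r *\<^sub>R U x + s *\<^sub>R V x) = r * load U + s * load V"
proof -
  have "load (\<lambda>x. r *\<^sub>R U x + s *\<^sub>R V x) =
      integral\<^sup>L lborel_Om (\<lambda>x. r * (G x * fst (U x)) + s * (G x * fst (V x)))"
    unfolding load_def by (rule Bochner_Integration.integral_cong) (simp_all add: algebra_simps)
  then show ?thesis
    using load_bound_L2(1)[OF assms(1)] load_bound_L2(1)[OF assms(2)] by (simp add: load_def)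
qed

lemma load_diff:
  "L2_field U \<Longrightarrow> L2_field V \<Longrightarrow> load (\<lambda>x. U x - V x) = load U - load V"
  using load_linear_combination[of U V 1 "-1"] by simp

lemma load_tendsto_zero:
  assumes "\<And>n. finite_energy (D n)" "(\<lambda>n. energy (D n)) \<longlonglongrightarrow> 0"
  shows "(\<lambda>n. load (D n)) \<longlonglongrightarrow> 0"
proof (rule tendsto_zero_by_AM_GM_bound[OF G_norm_sq_nonneg])
  show "(\<lambda>n. Kcoer * energy (D n)) \<longlonglongrightarrow> 0"
    using tendsto_mult_right_zero[OF assms(2)] by simp
qed (rule load_bound[OF assms(1)])

definition dirichlet :: "(real \<times> real \<Rightarrow> real) \<Rightarrow> real" where
  "dirichlet f = energy (jet f) / 2 + load (jet f)"

definition dirichlet_inf :: real where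
  "dirichlet_inf = Inf (dirichlet ` {f. test f})"

lemma dirichlet_lower_bound:
  assumes "test f"
  shows "- (Kcoer * G_norm_sq / 2) \<le> dirichlet f"
proof -
  have "\<bar>load (jet f)\<bar> \<le> (Kcoer * G_norm_sq + energy (jet f)) / 2"
    using load_bound[OF finite_energy_jet(1)[OF assms] Kcoer_pos] Kcoer_pos by simp
  then have "- load (jet f) \<le> (Kcoer * G_norm_sq + energy (jet f)) / 2"
    by (rule order_trans[OF abs_ge_minus_self])
  then show ?thesis
    unfolding dirichlet_def by (simp add: field_simps)
qed

lemma dirichlet_inf_le: "test f \<Longrightarrow> dirichlet_inf \<le> dirichlet f"
  unfolding dirichlet_inf_def
  by (rule cInf_lower) (auto intro!: bdd_belowI dirichlet_lower_bound)

lemma dirichlet_minimizing_sequence: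
  obtains \<phi> where "\<And>n. test (\<phi> n)" "\<And>n. dirichlet (\<phi> n) < dirichlet_inf + 1 / Suc n"
proof -
  have "\<exists>f. test f \<and> dirichlet f < dirichlet_inf + 1 / Suc n" for n
  proof -
    have "dirichlet ` {f. test f} \<noteq> {}"
      using test_zero by auto
    then show ?thesis
      using cInf_lessD[of "dirichlet ` {f. test f}" "dirichlet_inf + 1 / Suc n"]
      by (force simp: dirichlet_inf_def)
  qed
  then show ?thesis
    using that by metis
qed

lemma dirichlet_parallelogram:
  assumes f: "test f" and g: "test g"
  shows "energy (\<lambda>x. jet f x - jet g x) =
    4 * dirichlet f + 4 * dirichlet g - 8 * dirichlet (\<lambda>x. (1 / 2) * f x + (1 / 2) * g x)"
proof -
  let ?h = "\<lambda>x. (1 / 2) * f x + (1 / 2) * g x"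
  have jet_h: "jet ?h = (\<lambda>x. (1 / 2) *\<^sub>R jet f x + (1 / 2) *\<^sub>R jet g x)"
    by (rule jet_linear_combination[OF f g])
  have Ef: "finite_energy (jet f)" and Eg: "finite_energy (jet g)"
    using finite_energy_jet f g by auto
  then have Eh: "finite_energy (jet ?h)"
    unfolding jet_h by (rule finite_energy_linear_combination)
  have "energy (\<lambda>x. jet f x - jet g x) = integral\<^sup>L lborel_Om (\<lambda>x.
      2 * qform x (jet f x) + 2 * qform x (jet g x) - 4 * qform x (jet ?h x))"
    unfolding energy_def jet_h
    by (rule Bochner_Integration.integral_cong) (simp_all add: qform_parallelogram scaleR_right_distrib)
  also have "\<dots> = 2 * energy (jet f) + 2 * energy (jet g) - 4 * energy (jet ?h)"
    using Ef Eg Eh by (simp add: finite_energy_def energy_def)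
  finally show ?thesis
    unfolding dirichlet_def jet_h
    using load_linear_combination[OF L2_field_jet[OF f] L2_field_jet[OF g], of "1 / 2" "1 / 2"]
    by (simp add: algebra_simps)
qed

lemma dirichlet_perturb:
  assumes f: "test f" and p: "test p"
  shows "dirichlet (\<lambda>x. 1 * f x + t * p x) = dirichlet f
    + t * (energy_inner (jet p) (jet f) + load (jet p)) + t\<^sup>2 / 2 * energy (jet p)"
proof -
  have jet_ftp: "jet (\<lambda>x. 1 * f x + t * p x) = (\<lambda>x. t *\<^sub>R jet p x + jet f x)"
    using jet_linear_combination[OF f p, of 1 t] by (simp add: fun_eq_iff add.commute)
  show ?thesis
    unfolding dirichlet_def jet_ftp
    using energy_expand[OF finite_energy_jet(1)[OF p] finite_energy_jet(1)[OF f], of t]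
      load_linear_combination[OF L2_field_jet[OF p] L2_field_jet[OF f], of t 1]
    by (simp add: algebra_simps)
qed

end

context dirichlet_problem
begin

lemma minimizing_sequence_energy_Cauchy:
  assumes t: "\<And>n. test (\<phi> n)" and min: "\<And>n. dirichlet (\<phi> n) < dirichlet_inf + 1 / Suc n"
    and e: "e > 0"
  shows "\<exists>N. \<forall>n\<ge>N. \<forall>k\<ge>N. energy (\<lambda>x. jet (\<phi> n) x - jet (\<phi> k) x) < e"
proof -
  obtain N :: nat where N: "8 / e < N"
    using reals_Archimedean2 by blast
  then have N0: "N > 0"
    using e by (metis divide_pos_pos of_nat_0_less_iff order_less_trans zero_less_numeral)
  have "energy (\<lambda>x. jet (\<phi> n) x - jet (\<phi> k) x) < e" if "N \<le> n" "N \<le> k" for n k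
  proof -
    have "dirichlet_inf \<le> dirichlet (\<lambda>x. (1 / 2) * \<phi> n x + (1 / 2) * \<phi> k x)"
      by (rule dirichlet_inf_le[OF test_linear_combination[OF t t]])
    then have "energy (\<lambda>x. jet (\<phi> n) x - jet (\<phi> k) x) \<le>
        4 * (dirichlet (\<phi> n) - dirichlet_inf) + 4 * (dirichlet (\<phi> k) - dirichlet_inf)"
      using dirichlet_parallelogram[OF t t, of n k] by simp
    also have "\<dots> < 4 * (1 / Suc n) + 4 * (1 / Suc k)"
      using min[of n] min[of k] by simp
    also have "\<dots> \<le> 4 * (1 / N) + 4 * (1 / N)"
      using that N0 by (intro add_mono mult_left_mono divide_left_mono) auto
    also have "\<dots> < e"
      using N e N0 by (simp add: field_simps)
    finally show ?thesis .
  qed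
  then show ?thesis by blast
qed

lemma minimizing_sequence_tendsto:
  assumes t: "\<And>n. test (\<phi> n)" and min: "\<And>n. dirichlet (\<phi> n) < dirichlet_inf + 1 / Suc n"
  shows "(\<lambda>n. dirichlet (\<phi> n)) \<longlonglongrightarrow> dirichlet_inf"
proof (rule tendsto_sandwich[of "\<lambda>n. dirichlet_inf" _ _ "\<lambda>n. dirichlet_inf + 1 / Suc n"])
  show "(\<lambda>n. dirichlet_inf + 1 / real (Suc n)) \<longlonglongrightarrow> dirichlet_inf"
    using tendsto_add[OF tendsto_const LIMSEQ_inverse_real_of_nat] by (simp add: inverse_eq_divide)
  show "\<forall>\<^sub>F n in sequentially. dirichlet_inf \<le> dirichlet (\<phi> n)"
    using dirichlet_inf_le[OF t] by simp
  show "\<forall>\<^sub>F n in sequentially. dirichlet (\<phi> n) \<le> dirichlet_inf + 1 / Suc n"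
    using min by (simp add: less_imp_le)
qed simp

lemma euler_lagrange_of_minimizing_sequence:
  assumes t: "\<And>n. test (\<phi> n)" and min: "\<And>n. dirichlet (\<phi> n) < dirichlet_inf + 1 / Suc n"
    and W: "finite_energy W" and D: "\<And>n. finite_energy (\<lambda>x. jet (\<phi> n) x - W x)"
    and lim: "(\<lambda>n. energy (\<lambda>x. jet (\<phi> n) x - W x)) \<longlonglongrightarrow> 0"
    and p: "test p"
  shows "energy_inner W (jet p) + load (jet p) = 0"
proof -
  have Ep: "finite_energy (jet p)" and E\<phi>: "\<And>n. finite_energy (jet (\<phi> n))"
    using finite_energy_jet(1) t p by auto
  have dirichlet_lim: "(\<lambda>n. dirichlet (\<phi> n)) \<longlonglongrightarrow> dirichlet_inf"
    by (rule minimizing_sequence_tendsto[OF t min])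
  have "(\<lambda>n. energy_inner (jet p) (jet (\<phi> n)) - energy_inner (jet p) W) \<longlonglongrightarrow> 0"
    using energy_inner_tendsto_zero[OF Ep D lim] energy_inner_diff_right[OF Ep E\<phi> W] by simp
  then have inner_lim: "(\<lambda>n. energy_inner (jet p) (jet (\<phi> n))) \<longlonglongrightarrow> energy_inner (jet p) W"
    by (simp add: LIM_zero_iff)
  have "0 \<le> s * (energy_inner (jet p) W + load (jet p)) + s\<^sup>2 * energy (jet p) / 2" for s
  proof -
    let ?d = "\<lambda>w. dirichlet_inf + s * (w + load (jet p)) + s\<^sup>2 / 2 * energy (jet p)"
    have "dirichlet_inf \<le> ?d (energy_inner (jet p) W)"
    proof (rule LIMSEQ_le_const)
      have "(\<lambda>n. ?d (energy_inner (jet p) (jet (\<phi> n))) + (dirichlet (\<phi> n) - dirichlet_inf))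
          \<longlonglongrightarrow> ?d (energy_inner (jet p) W) + 0"
        using inner_lim LIM_zero[OF dirichlet_lim] by (intro tendsto_intros)
      then show "(\<lambda>n. ?d (energy_inner (jet p) (jet (\<phi> n))) + (dirichlet (\<phi> n) - dirichlet_inf))
          \<longlonglongrightarrow> ?d (energy_inner (jet p) W)"
        by simp
      show "\<exists>N. \<forall>n\<ge>N. dirichlet_inf \<le>
          ?d (energy_inner (jet p) (jet (\<phi> n))) + (dirichlet (\<phi> n) - dirichlet_inf)"
        using dirichlet_inf_le[OF test_linear_combination[OF t p, of 1 _ s]]
          dirichlet_perturb[OF t p, of _ s] energy_inner_sym
        by (auto simp: algebra_simps)
    qed
    then show ?thesis by (simp add: algebra_simps)
  qed
  then have "energy_inner (jet p) W + load (jet p) = 0"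
    by (rule linear_coeff_eq_0_if_quadratic_nonneg[OF energy_nonneg])
  then show ?thesis by (simp add: energy_inner_sym)
qed

lemma euler_lagrange_closure:
  assumes W: "finite_energy W"
    and EL: "\<And>p. test p \<Longrightarrow> energy_inner W (jet p) + load (jet p) = 0"
    and V: "finite_energy V" and t: "\<And>k. test (\<psi> k)"
    and lim: "(\<lambda>k. energy (\<lambda>x. jet (\<psi> k) x - V x)) \<longlonglongrightarrow> 0"
  shows "energy_inner W V + load V = 0"
proof -
  have E\<psi>: "finite_energy (jet (\<psi> k))" for k
    using finite_energy_jet t by auto
  have D: "finite_energy (\<lambda>x. jet (\<psi> k) x - V x)" for k
    by (rule finite_energy_diff[OF E\<psi> V])
  have "(\<lambda>k. (energy_inner W (jet (\<psi> k)) - energy_inner W V) + (load (jet (\<psi> k)) - load V))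
      \<longlonglongrightarrow> 0 + 0"
    using energy_inner_tendsto_zero[OF W D lim] load_tendsto_zero[OF D lim]
      energy_inner_diff_right[OF W E\<psi> V]
      load_diff[OF L2_field_jet[OF t] finite_energy_imp_L2_field(1)[OF V]]
    by (intro tendsto_add) simp_all
  moreover have "(energy_inner W (jet (\<psi> k)) - energy_inner W V) + (load (jet (\<psi> k)) - load V)
      = - (energy_inner W V + load V)" for k
    using EL[OF t[of k]] by simp
  ultimately show ?thesis
    by (simp add: LIMSEQ_const_iff)
qed

text \<open>The solution is set to \<open>0\<close> outside \<open>Om\<close>: on the lines \<open>R = 1, 7\<close> the factor
  \<open>rho powr (m - 1)\<close> vanishes, and only such a field can be written as \<open>rho powr (m - 1) * w\<close>.\<close>

lemma variational_solution:
  obtains W \<phi> where "finite_energy W" "\<And>x. x \<notin> Om \<Longrightarrow> W x = 0" "\<And>n. test (\<phi> n)"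
    "(\<lambda>n. energy (\<lambda>x. jet (\<phi> n) x - W x)) \<longlonglongrightarrow> 0"
    "\<And>V VR VT. H10 V VR VT \<Longrightarrow> energy_inner W (triple V VR VT) + load (triple V VR VT) = 0"
    "energy W \<le> Kcoer * G_norm_sq"
proof -
  obtain \<phi> where t: "\<And>n. test (\<phi> n)" and min: "\<And>n. dirichlet (\<phi> n) < dirichlet_inf + 1 / Suc n"
    using dirichlet_minimizing_sequence by blast
  obtain W0 where W0: "finite_energy W0" and D0: "\<And>n. finite_energy (\<lambda>x. jet (\<phi> n) x - W0 x)"
    and lim0: "(\<lambda>n. energy (\<lambda>x. jet (\<phi> n) x - W0 x)) \<longlonglongrightarrow> 0"
    using finite_energy_complete[of "\<lambda>n. jet (\<phi> n)"] finite_energy_jet(1)[OF t]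
      minimizing_sequence_energy_Cauchy[OF t min] by blast
  define W where "W x = (if x \<in> Om then W0 x else 0)" for x
  have on_Om: "\<And>x. x \<in> Om \<Longrightarrow> W x = W0 x"
    by (simp add: W_def)
  have outside: "\<And>x. x \<notin> Om \<Longrightarrow> W x = 0"
    by (simp add: W_def)
  have W: "finite_energy W"
    by (rule finite_energy_cong[OF W0 on_Om])
  have energy_eq: "energy (\<lambda>x. U x - W x) = energy (\<lambda>x. U x - W0 x)" for U
    unfolding energy_def by (rule Bochner_Integration.integral_cong) (simp_all add: on_Om)
  have inner_eq: "energy_inner W V = energy_inner W0 V" for V
    unfolding energy_inner_def by (rule Bochner_Integration.integral_cong) (simp_all add: on_Om)
  have lim: "(\<lambda>n. energy (\<lambda>x. jet (\<phi> n) x - W x)) \<longlonglongrightarrow> 0"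
    using lim0 by (simp add: energy_eq)
  have EL: "energy_inner W (jet p) + load (jet p) = 0" if "test p" for p
    using euler_lagrange_of_minimizing_sequence[OF t min W0 D0 lim0 that] by (simp add: inner_eq)
  have "energy_inner W (triple V VR VT) + load (triple V VR VT) = 0" if "H10 V VR VT" for V VR VT
    using H10_in_energy_closure[OF that] euler_lagrange_closure[OF W EL] by blast
  moreover have "energy W \<le> Kcoer * G_norm_sq"
  proof -
    have "energy W = - load W"
      using euler_lagrange_closure[OF W EL W t lim] by (simp add: energy_inner_self)
    also have "\<dots> \<le> (Kcoer * G_norm_sq + energy W) / 2"
      using load_bound[OF W Kcoer_pos] Kcoer_pos by simp
    finally show ?thesis by simp
  qed
  ultimately show ?thesis
    using that[OF W outside t lim] by blast
qed

end

section \<open>Weak derivatives and \<open>H\<^sup>1\<^sub>0\<close>\<close>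

lemma L2_mult:
  assumes f: "L2 f" and h: "L2 h"
  shows "integrable lborel_Om (\<lambda>x. f x * h x)"
    "l > 0 \<Longrightarrow> \<bar>integral\<^sup>L lborel_Om (\<lambda>x. f x * h x)\<bar> \<le>
       (l * integral\<^sup>L lborel_Om (\<lambda>x. (h x)\<^sup>2) + integral\<^sup>L lborel_Om (\<lambda>x. (f x)\<^sup>2) / l) / 2"
proof -
  have mf: "f \<in> borel_measurable lborel_Om" and i_f: "integrable lborel_Om (\<lambda>x. (f x)\<^sup>2)"
    and mh: "h \<in> borel_measurable lborel_Om" and ih: "integrable lborel_Om (\<lambda>x. (h x)\<^sup>2)"
    using f h by (auto simp: L2_iff)
  have le: "\<bar>f x * h x\<bar> \<le> (l * (h x)\<^sup>2 + (f x)\<^sup>2 / l) / 2" if "l > 0" for x l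
    using abs_mult_le_AM_GM[OF that, of "h x" "f x"] by (simp add: mult.commute)
  show i: "integrable lborel_Om (\<lambda>x. f x * h x)"
  proof (rule integrable_lborel_Om_dominated)
    show "integrable lborel_Om (\<lambda>x. (1 * (h x)\<^sup>2 + (f x)\<^sup>2 / 1) / 2)"
      using i_f ih by simp
    show "(\<lambda>x. f x * h x) \<in> borel_measurable lborel_Om"
      using mf mh by (rule borel_measurable_times)
    show "\<bar>f x * h x\<bar> \<le> (1 * (h x)\<^sup>2 + (f x)\<^sup>2 / 1) / 2" for x
      using le[of 1 x] by simp
  qed
  assume l: "l > 0"
  have "\<bar>integral\<^sup>L lborel_Om (\<lambda>x. f x * h x)\<bar> \<le> integral\<^sup>L lborel_Om (\<lambda>x. \<bar>f x * h x\<bar>)"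
    by (rule integral_abs_bound)
  also have "\<dots> \<le> integral\<^sup>L lborel_Om (\<lambda>x. (l * (h x)\<^sup>2 + (f x)\<^sup>2 / l) / 2)"
    using i i_f ih le[OF l] by (intro integral_mono) auto
  also have "\<dots> = (l * integral\<^sup>L lborel_Om (\<lambda>x. (h x)\<^sup>2) + integral\<^sup>L lborel_Om (\<lambda>x. (f x)\<^sup>2) / l) / 2"
    using i_f ih by simp
  finally show "\<bar>integral\<^sup>L lborel_Om (\<lambda>x. f x * h x)\<bar> \<le>
      (l * integral\<^sup>L lborel_Om (\<lambda>x. (h x)\<^sup>2) + integral\<^sup>L lborel_Om (\<lambda>x. (f x)\<^sup>2) / l) / 2" .
qed

lemma L2_diff:
  assumes f: "L2 f" and g: "L2 g"
  shows "L2 (\<lambda>x. f x - g x)"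
proof -
  have "L2_field (\<lambda>x. triple f f f x - triple g g g x)"
    using L2_field_diff(1)[OF L2_field_triple[OF f f f] L2_field_triple[OF g g g]] .
  from L2_field_components(1)[OF this] show ?thesis
    by (simp add: triple_def)
qed

lemma integral_L2_mult_diff:
  assumes "L2 f" "L2 g" "L2 h"
  shows "integral\<^sup>L lborel_Om (\<lambda>x. (f x - g x) * h x) =
    integral\<^sup>L lborel_Om (\<lambda>x. f x * h x) - integral\<^sup>L lborel_Om (\<lambda>x. g x * h x)"
  using L2_mult(1)[OF assms(1,3)] L2_mult(1)[OF assms(2,3)] by (simp add: left_diff_distrib)

lemma tendsto_integral_L2_mult:
  assumes g: "\<And>n. L2 (g n)" and g0: "L2 g0" and h: "L2 h"
    and lim: "(\<lambda>n. integral\<^sup>L lborel_Om (\<lambda>x. (g n x - g0 x)\<^sup>2)) \<longlonglongrightarrow> 0"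
  shows "(\<lambda>n. integral\<^sup>L lborel_Om (\<lambda>x. g n x * h x)) \<longlonglongrightarrow> integral\<^sup>L lborel_Om (\<lambda>x. g0 x * h x)"
proof -
  have "(\<lambda>n. integral\<^sup>L lborel_Om (\<lambda>x. (g n x - g0 x) * h x)) \<longlonglongrightarrow> 0"
  proof (rule tendsto_zero_by_AM_GM_bound[OF _ lim])
    show "0 \<le> integral\<^sup>L lborel_Om (\<lambda>x. (h x)\<^sup>2)"
      by (auto intro: Bochner_Integration.integral_nonneg)
  qed (rule L2_mult(2)[OF L2_diff[OF g g0] h])
  then show ?thesis
    by (simp add: integral_L2_mult_diff[OF g g0 h] LIM_zero_iff)
qed

lemma weak_derivs_iff:
  "weak_derivs u gR gT \<longleftrightarrow> (\<forall>\<phi>. test \<phi> \<longrightarrow>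
     integral\<^sup>L lborel_Om (\<lambda>x. u x * dR \<phi> x) = - integral\<^sup>L lborel_Om (\<lambda>x. gR x * \<phi> x) \<and>
     integral\<^sup>L lborel_Om (\<lambda>x. u x * dT \<phi> x) = - integral\<^sup>L lborel_Om (\<lambda>x. gT x * \<phi> x))"
  unfolding weak_derivs_def integral_lborel_Om ..

lemma H1_diff:
  assumes H1: "H1 V1 R1 T1" and H2: "H1 V2 R2 T2"
  shows "H1 (\<lambda>x. V1 x - V2 x) (\<lambda>x. R1 x - R2 x) (\<lambda>x. T1 x - T2 x)"
proof -
  have L: "L2 V1" "L2 R1" "L2 T1" "L2 V2" "L2 R2" "L2 T2"
    using H1 H2 by (auto simp: H1_def)
  have "weak_derivs (\<lambda>x. V1 x - V2 x) (\<lambda>x. R1 x - R2 x) (\<lambda>x. T1 x - T2 x)"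
    unfolding weak_derivs_iff
  proof (intro allI impI)
    fix \<phi> assume t: "test \<phi>"
    then show "integral\<^sup>L lborel_Om (\<lambda>x. (V1 x - V2 x) * dR \<phi> x) =
          - integral\<^sup>L lborel_Om (\<lambda>x. (R1 x - R2 x) * \<phi> x) \<and>
        integral\<^sup>L lborel_Om (\<lambda>x. (V1 x - V2 x) * dT \<phi> x) =
          - integral\<^sup>L lborel_Om (\<lambda>x. (T1 x - T2 x) * \<phi> x)"
      using H1 H2 test_L2[OF t] L
      by (simp add: integral_L2_mult_diff H1_def weak_derivs_iff)
  qed
  then show ?thesis
    unfolding H1_def using L by (auto intro: L2_diff)
qed

lemma H10_diff:
  assumes H1: "H10 V1 R1 T1" and H2: "H10 V2 R2 T2"
  shows "H10 (\<lambda>x. V1 x - V2 x) (\<lambda>x. R1 x - R2 x) (\<lambda>x. T1 x - T2 x)"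
proof -
  let ?err = "\<lambda>\<phi> V R T n. integral\<^sup>L lborel_Om (\<lambda>x. (norm (jet (\<phi> n) x - triple V R T x))\<^sup>2)"
  obtain \<phi>1 where t1: "\<And>n. test (\<phi>1 n)" and lim1: "?err \<phi>1 V1 R1 T1 \<longlonglongrightarrow> 0"
    using H1 by (auto simp: H10_iff)
  obtain \<phi>2 where t2: "\<And>n. test (\<phi>2 n)" and lim2: "?err \<phi>2 V2 R2 T2 \<longlonglongrightarrow> 0"
    using H2 by (auto simp: H10_iff)
  define \<phi> where "\<phi> n x = 1 * \<phi>1 n x + (-1) * \<phi>2 n x" for n x
  have t: "test (\<phi> n)" for n
    unfolding \<phi>_def by (rule test_linear_combination[OF t1 t2])
  have D1: "L2_field (\<lambda>x. jet (\<phi>1 n) x - triple V1 R1 T1 x)"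
    and D2: "L2_field (\<lambda>x. jet (\<phi>2 n) x - triple V2 R2 T2 x)" for n
    using H1 H2 by (auto intro!: L2_field_diff(1) L2_field_jet t1 t2 H1_imp_L2_field simp: H10_iff)
  have err_eq: "jet (\<phi> n) x - triple (\<lambda>x. V1 x - V2 x) (\<lambda>x. R1 x - R2 x) (\<lambda>x. T1 x - T2 x) x =
      (jet (\<phi>1 n) x - triple V1 R1 T1 x) - (jet (\<phi>2 n) x - triple V2 R2 T2 x)" for n x
    using jet_linear_combination[OF t1 t2, of 1 n "-1" n] by (simp add: \<phi>_def[abs_def] triple_def)
  have "?err \<phi> (\<lambda>x. V1 x - V2 x) (\<lambda>x. R1 x - R2 x) (\<lambda>x. T1 x - T2 x) \<longlonglongrightarrow> 0"
  proof (rule tendsto_sandwich[of "\<lambda>n. 0" _ _ "\<lambda>n. 2 * ?err \<phi>1 V1 R1 T1 n + 2 * ?err \<phi>2 V2 R2 T2 n"])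
    show "(\<lambda>n. 2 * ?err \<phi>1 V1 R1 T1 n + 2 * ?err \<phi>2 V2 R2 T2 n) \<longlonglongrightarrow> 0"
      using lim1 lim2 by (auto intro!: tendsto_eq_intros)
  qed (use L2_field_diff(2)[OF D1 D2] in \<open>simp_all add: err_eq\<close>)
  moreover have "H1 (\<lambda>x. V1 x - V2 x) (\<lambda>x. R1 x - R2 x) (\<lambda>x. T1 x - T2 x)"
    using H1 H2 by (auto intro: H1_diff simp: H10_iff)
  ultimately show ?thesis
    unfolding H10_iff using t by blast
qed

lemma L2_convergence_components:
  assumes \<Psi>: "\<And>n. L2_field (\<Psi> n)" and W: "L2_field W"
    and lim: "(\<lambda>n. integral\<^sup>L lborel_Om (\<lambda>x. (norm (\<Psi> n x - W x))\<^sup>2)) \<longlonglongrightarrow> 0"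
  shows "(\<lambda>n. integral\<^sup>L lborel_Om (\<lambda>x. (fst (\<Psi> n x) - fst (W x))\<^sup>2)) \<longlonglongrightarrow> 0"
    "(\<lambda>n. integral\<^sup>L lborel_Om (\<lambda>x. (fst (snd (\<Psi> n x)) - fst (snd (W x)))\<^sup>2)) \<longlonglongrightarrow> 0"
    "(\<lambda>n. integral\<^sup>L lborel_Om (\<lambda>x. (snd (snd (\<Psi> n x)) - snd (snd (W x)))\<^sup>2)) \<longlonglongrightarrow> 0"
proof -
  have D: "L2_field (\<lambda>x. \<Psi> n x - W x)" for n
    by (rule L2_field_diff(1)[OF \<Psi> W])
  have component: "(\<lambda>n. integral\<^sup>L lborel_Om (\<lambda>x. (\<pi> (\<Psi> n x - W x))\<^sup>2)) \<longlonglongrightarrow> 0"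
    if L2: "\<And>n. L2 (\<lambda>x. \<pi> (\<Psi> n x - W x))" and le: "\<And>v. (\<pi> v)\<^sup>2 \<le> (norm v)\<^sup>2" for \<pi>
  proof (rule tendsto_sandwich[OF _ _ tendsto_const lim])
    show "\<forall>\<^sub>F n in sequentially. integral\<^sup>L lborel_Om (\<lambda>x. (\<pi> (\<Psi> n x - W x))\<^sup>2) \<le>
        integral\<^sup>L lborel_Om (\<lambda>x. (norm (\<Psi> n x - W x))\<^sup>2)"
      using L2 D le by (intro always_eventually allI integral_mono) (auto simp: L2_iff L2_field_def)
  qed (simp add: Bochner_Integration.integral_nonneg)
  show "(\<lambda>n. integral\<^sup>L lborel_Om (\<lambda>x. (fst (\<Psi> n x) - fst (W x))\<^sup>2)) \<longlonglongrightarrow> 0"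
    "(\<lambda>n. integral\<^sup>L lborel_Om (\<lambda>x. (fst (snd (\<Psi> n x)) - fst (snd (W x)))\<^sup>2)) \<longlonglongrightarrow> 0"
    "(\<lambda>n. integral\<^sup>L lborel_Om (\<lambda>x. (snd (snd (\<Psi> n x)) - snd (snd (W x)))\<^sup>2)) \<longlonglongrightarrow> 0"
    using component[of fst] component[of "\<lambda>v. fst (snd v)"] component[of "\<lambda>v. snd (snd v)"]
      L2_field_components[OF D]
    by (simp_all add: norm_sq_components)
qed

lemma weak_derivs_of_jet_limit:
  assumes t: "\<And>n. test (\<phi> n)" and W: "L2_field W"
    and lim: "(\<lambda>n. integral\<^sup>L lborel_Om (\<lambda>x. (norm (jet (\<phi> n) x - W x))\<^sup>2)) \<longlonglongrightarrow> 0"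
  shows "weak_derivs (\<lambda>x. fst (W x)) (\<lambda>x. fst (snd (W x))) (\<lambda>x. snd (snd (W x)))"
  unfolding weak_derivs_iff
proof (intro allI impI conjI)
  fix \<psi> assume \<psi>: "test \<psi>"
  note W' = L2_field_components[OF W] and \<phi> = test_L2[OF t] and \<psi>' = test_L2[OF \<psi>]
  note lims = L2_convergence_components[OF L2_field_jet[OF t] W lim, unfolded jet_def triple_def,
      simplified]
  have "(\<lambda>n. integral\<^sup>L lborel_Om (\<lambda>x. \<phi> n x * dR \<psi> x)) \<longlonglongrightarrow>
      integral\<^sup>L lborel_Om (\<lambda>x. fst (W x) * dR \<psi> x)"
    by (rule tendsto_integral_L2_mult[OF \<phi>(1) W'(1) \<psi>'(2) lims(1)])
  moreover have "(\<lambda>n. integral\<^sup>L lborel_Om (\<lambda>x. \<phi> n x * dR \<psi> x)) \<longlonglongrightarrow>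
      - integral\<^sup>L lborel_Om (\<lambda>x. fst (snd (W x)) * \<psi> x)"
    unfolding integration_by_parts_R[OF t \<psi>]
    by (intro tendsto_minus tendsto_integral_L2_mult[OF \<phi>(2) W'(2) \<psi>'(1) lims(2)])
  ultimately show "integral\<^sup>L lborel_Om (\<lambda>x. fst (W x) * dR \<psi> x) =
      - integral\<^sup>L lborel_Om (\<lambda>x. fst (snd (W x)) * \<psi> x)"
    by (rule LIMSEQ_unique)
  have "(\<lambda>n. integral\<^sup>L lborel_Om (\<lambda>x. \<phi> n x * dT \<psi> x)) \<longlonglongrightarrow>
      integral\<^sup>L lborel_Om (\<lambda>x. fst (W x) * dT \<psi> x)"
    by (rule tendsto_integral_L2_mult[OF \<phi>(1) W'(1) \<psi>'(3) lims(1)])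
  moreover have "(\<lambda>n. integral\<^sup>L lborel_Om (\<lambda>x. \<phi> n x * dT \<psi> x)) \<longlonglongrightarrow>
      - integral\<^sup>L lborel_Om (\<lambda>x. snd (snd (W x)) * \<psi> x)"
    unfolding integration_by_parts_theta[OF t \<psi>]
    by (intro tendsto_minus tendsto_integral_L2_mult[OF \<phi>(3) W'(3) \<psi>'(1) lims(3)])
  ultimately show "integral\<^sup>L lborel_Om (\<lambda>x. fst (W x) * dT \<psi> x) =
      - integral\<^sup>L lborel_Om (\<lambda>x. snd (snd (W x)) * \<psi> x)"
    by (rule LIMSEQ_unique)
qed

lemma (in energy_form) H10_of_energy_limit:
  assumes W: "finite_energy W" and t: "\<And>n. test (\<phi> n)"
    and lim: "(\<lambda>n. energy (\<lambda>x. jet (\<phi> n) x - W x)) \<longlonglongrightarrow> 0"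
  shows "H10 (\<lambda>x. fst (W x)) (\<lambda>x. fst (snd (W x))) (\<lambda>x. snd (snd (W x)))"
proof -
  have W_eq: "triple (\<lambda>x. fst (W x)) (\<lambda>x. fst (snd (W x))) (\<lambda>x. snd (snd (W x))) = W"
    by (simp add: triple_def)
  have LW: "L2_field W"
    by (rule finite_energy_imp_L2_field(1)[OF W])
  have L2_lim: "(\<lambda>n. integral\<^sup>L lborel_Om (\<lambda>x. (norm (jet (\<phi> n) x - W x))\<^sup>2)) \<longlonglongrightarrow> 0"
    using L2_tendsto_zero_of_energy[OF finite_energy_diff[OF finite_energy_jet(1)[OF t] W] lim] .
  show ?thesis
    unfolding H10_iff H1_def W_eq
    using L2_field_components[OF LW] weak_derivs_of_jet_limit[OF t LW L2_lim] t L2_lim by blast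
qed

lemma (in energy_form) energy_eq_0_imp_AE_zero:
  assumes V: "finite_energy V" and E: "energy V = 0"
  shows "AE x in lborel_Om. V x = 0"
proof -
  have "AE x in lborel_Om. 0 \<le> qform x (V x)"
    by (intro AE_I2) (simp add: qform_nonneg)
  then have "AE x in lborel_Om. qform x (V x) = 0"
    using E V integral_nonneg_eq_0_iff_AE[of lborel_Om "\<lambda>x. qform x (V x)"]
    by (simp add: energy_def finite_energy_def)
  then show ?thesis
  proof (rule AE_mp, intro AE_I2 impI)
    fix x assume "x \<in> space lborel_Om" "qform x (V x) = 0"
    then have "(norm (V x))\<^sup>2 \<le> 0"
      using norm_sq_le_qform[of x "V x"] by simp
    then show "V x = 0" by simp
  qed
qed

section \<open>The weighted boundary value problem\<close>

locale weighted_problem =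
  fixes a m :: real
  assumes a_ge: "a \<ge> 4" and m_gt: "m > 2"
begin

sublocale energy_form a "(m - 1) * (m - 2)"
  using a_ge m_gt by unfold_locales (auto intro: mult_pos_pos)

lemma weak_sol_iff:
  "weak_sol a m F W WR WT \<longleftrightarrow> (\<forall>V VR VT. H10 V VR VT \<longrightarrow>
     integrable lborel_Om (\<lambda>x. bform x (triple W WR WT x) (triple V VR VT x)) \<and>
     energy_inner (triple W WR WT) (triple V VR VT) =
       - integral\<^sup>L lborel_Om (\<lambda>x. rho (fst x) powr (m - 2) * F x * V x * (fst x + a - 4)))"
  unfolding weak_sol_def Let_def energy_inner_def integrable_lborel_Om_iff integral_lborel_Om
  by (simp add: bform_def triple_def)

lemma weak_sol_unique_AE:
  assumes H1: "H10 W1 R1 T1" and S1: "weak_sol a m F W1 R1 T1"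
    and H2: "H10 W2 R2 T2" and S2: "weak_sol a m F W2 R2 T2"
  shows "AE x in lborel_Om. W1 x = W2 x"
proof -
  let ?V = "triple (\<lambda>x. W1 x - W2 x) (\<lambda>x. R1 x - R2 x) (\<lambda>x. T1 x - T2 x)"
  have HV: "H10 (\<lambda>x. W1 x - W2 x) (\<lambda>x. R1 x - R2 x) (\<lambda>x. T1 x - T2 x)"
    by (rule H10_diff[OF H1 H2])
  have V_eq: "?V = (\<lambda>x. triple W1 R1 T1 x - triple W2 R2 T2 x)"
    by (simp add: triple_def fun_eq_iff)
  have "energy ?V = energy_inner ?V ?V"
    by (simp add: energy_inner_self)
  also have "\<dots> = energy_inner ?V (triple W1 R1 T1) - energy_inner ?V (triple W2 R2 T2)"
    using H10_in_energy_closure(1)[OF HV] H10_in_energy_closure(1)[OF H1]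
      H10_in_energy_closure(1)[OF H2]
    by (subst (2) V_eq) (rule energy_inner_diff_right)
  also have "\<dots> = energy_inner (triple W1 R1 T1) ?V - energy_inner (triple W2 R2 T2) ?V"
    by (simp add: energy_inner_sym)
  also have "\<dots> = 0"
    using S1 S2 HV by (simp add: weak_sol_iff)
  finally have "AE x in lborel_Om. ?V x = 0"
    by (rule energy_eq_0_imp_AE_zero[OF H10_in_energy_closure(1)[OF HV]])
  then show ?thesis
    by eventually_elim (simp add: triple_def zero_prod_def)
qed

lemma weak_sol_unique:
  assumes "H10 (\<lambda>x. rho (fst x) powr (m - 1) * w1 x) R1 T1"
    "weak_sol a m F (\<lambda>x. rho (fst x) powr (m - 1) * w1 x) R1 T1"
    "H10 (\<lambda>x. rho (fst x) powr (m - 1) * w2 x) R2 T2"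
    "weak_sol a m F (\<lambda>x. rho (fst x) powr (m - 1) * w2 x) R2 T2"
  shows "AE x in lborel. x \<in> Om \<longrightarrow> w1 x = w2 x"
proof -
  have "AE x in lborel_Om. w1 x = w2 x"
    using weak_sol_unique_AE[OF assms]
  proof (rule AE_mp, intro AE_I2 impI)
    fix x assume "x \<in> space lborel_Om"
      "rho (fst x) powr (m - 1) * w1 x = rho (fst x) powr (m - 1) * w2 x"
    then show "w1 x = w2 x"
      using rho_pos_Om[of x] by simp
  qed
  then show ?thesis
    by (simp add: AE_restrict_space_iff)
qed

definition load_density :: "(real \<times> real \<Rightarrow> real) \<Rightarrow> real \<times> real \<Rightarrow> real" where
  "load_density F x = rho (fst x) powr (m - 2) * F x * (fst x + a - 4)"

definition Kload :: real where
  "Kload = (3 / 2) powr (m - 2) * (a + 3)"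

lemma Kload_pos: "Kload > 0"
  unfolding Kload_def using a_ge by simp

lemma L2_load_density:
  assumes F: "L2 F"
  shows "L2 (load_density F)"
    "integral\<^sup>L lborel_Om (\<lambda>x. (load_density F x)\<^sup>2) \<le> Kload\<^sup>2 * integral\<^sup>L lborel_Om (\<lambda>x. (F x)\<^sup>2)"
proof -
  have mF [measurable]: "F \<in> borel_measurable lborel_Om" and iF: "integrable lborel_Om (\<lambda>x. (F x)\<^sup>2)"
    using F by (simp_all add: L2_iff)
  have m: "load_density F \<in> borel_measurable lborel_Om"
    unfolding load_density_def[abs_def] by measurable
  have le: "(load_density F x)\<^sup>2 \<le> Kload\<^sup>2 * (F x)\<^sup>2" if x: "x \<in> Om" for x
  proof -
    have "rho (fst x) powr (m - 2) \<le> (3 / 2) powr (m - 2)"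
      using rho_pos_Om[OF x] rho_le m_gt by (intro powr_mono2) auto
    moreover have "0 \<le> fst x + a - 4" "fst x + a - 4 \<le> a + 3"
      using weight_bounds[OF x] by auto
    moreover have "\<bar>load_density F x\<bar> = rho (fst x) powr (m - 2) * (fst x + a - 4) * \<bar>F x\<bar>"
      unfolding load_density_def using weight_bounds[OF x] by (simp add: abs_mult)
    ultimately have "\<bar>load_density F x\<bar> \<le> (3 / 2) powr (m - 2) * (a + 3) * \<bar>F x\<bar>"
      by (metis abs_ge_zero mult_mono mult_right_mono powr_ge_zero)
    then have "\<bar>load_density F x\<bar> \<le> Kload * \<bar>F x\<bar>"
      by (simp add: Kload_def)
    then have "\<bar>load_density F x\<bar>\<^sup>2 \<le> (Kload * \<bar>F x\<bar>)\<^sup>2"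
      by (intro power_mono) auto
    then show ?thesis
      by (simp add: power_mult_distrib)
  qed
  have i: "integrable lborel_Om (\<lambda>x. (load_density F x)\<^sup>2)"
  proof (rule integrable_lborel_Om_dominated)
    show "integrable lborel_Om (\<lambda>x. Kload\<^sup>2 * (F x)\<^sup>2)"
      using iF by simp
    show "(\<lambda>x. (load_density F x)\<^sup>2) \<in> borel_measurable lborel_Om"
      using m by measurable
  qed (simp add: le)
  then show "L2 (load_density F)"
    using m by (simp add: L2_iff)
  have "integral\<^sup>L lborel_Om (\<lambda>x. (load_density F x)\<^sup>2) \<le> integral\<^sup>L lborel_Om (\<lambda>x. Kload\<^sup>2 * (F x)\<^sup>2)"
    using i iF le by (intro integral_mono) auto
  then show "integral\<^sup>L lborel_Om (\<lambda>x. (load_density F x)\<^sup>2) \<le>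
      Kload\<^sup>2 * integral\<^sup>L lborel_Om (\<lambda>x. (F x)\<^sup>2)"
    by simp
qed

end

lemma (in energy_form) H1norm_le_energy:
  assumes "finite_energy (triple W WR WT)"
  shows "H1norm W WR WT \<le> sqrt (Kcoer * energy (triple W WR WT))"
  using finite_energy_imp_L2_field(2)[OF assms]
  unfolding H1norm_def integral_lborel_Om[symmetric] norm_triple_sq by simp

context weighted_problem
begin

lemma weak_sol_exists_vanishing_outside:
  assumes F: "L2 F"
  obtains W WR WT where "H10 W WR WT" "weak_sol a m F W WR WT" "\<And>x. x \<notin> Om \<Longrightarrow> W x = 0"
    "H1norm W WR WT \<le> Kcoer * Kload * L2norm F"
proof -
  interpret dirichlet_problem a "(m - 1) * (m - 2)" "load_density F"
    by unfold_locales (rule L2_load_density(1)[OF F])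
  obtain U \<phi> where U: "finite_energy U" and outside: "\<And>x. x \<notin> Om \<Longrightarrow> U x = 0"
    and t: "\<And>n. test (\<phi> n)" and lim: "(\<lambda>n. energy (\<lambda>x. jet (\<phi> n) x - U x)) \<longlonglongrightarrow> 0"
    and EL: "\<And>V VR VT. H10 V VR VT \<Longrightarrow> energy_inner U (triple V VR VT) + load (triple V VR VT) = 0"
    and bound: "energy U \<le> Kcoer * G_norm_sq"
    using variational_solution by blast
  define W WR WT where "W x = fst (U x)" and "WR x = fst (snd (U x))" and "WT x = snd (snd (U x))"
    for x
  have U_eq: "triple W WR WT = U"
    by (simp add: triple_def W_def WR_def WT_def)
  have "H10 W WR WT"
    using H10_of_energy_limit[OF U t lim] by (simp add: W_def[abs_def] WR_def[abs_def] WT_def[abs_def])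
  moreover have "weak_sol a m F W WR WT"
    unfolding weak_sol_iff U_eq
  proof (intro allI impI conjI)
    fix V VR VT assume V: "H10 V VR VT"
    show "integrable lborel_Om (\<lambda>x. bform x (U x) (triple V VR VT x))"
      by (rule integrable_bform[OF U H10_in_energy_closure(1)[OF V]])
    show "energy_inner U (triple V VR VT) =
        - integral\<^sup>L lborel_Om (\<lambda>x. rho (fst x) powr (m - 2) * F x * V x * (fst x + a - 4))"
      using EL[OF V] by (simp add: load_def load_density_def triple_def mult_ac)
  qed
  moreover have "H1norm W WR WT \<le> Kcoer * Kload * L2norm F"
  proof -
    have "energy U \<le> Kcoer * (Kload\<^sup>2 * integral\<^sup>L lborel_Om (\<lambda>x. (F x)\<^sup>2))"
      using bound mult_left_mono[OF L2_load_density(2)[OF F] less_imp_le[OF Kcoer_pos]]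
      unfolding G_norm_sq_def by (rule order_trans)
    then have "sqrt (Kcoer * energy U) \<le> sqrt (Kcoer * (Kcoer * (Kload\<^sup>2 * integral\<^sup>L lborel_Om (\<lambda>x. (F x)\<^sup>2))))"
      using Kcoer_pos by (intro real_sqrt_le_mono mult_left_mono) auto
    also have "\<dots> = Kcoer * Kload * L2norm F"
      using Kcoer_pos Kload_pos
      by (simp add: L2norm_def integral_lborel_Om real_sqrt_mult power2_eq_square)
    finally show ?thesis
      using H1norm_le_energy[of W WR WT] U by (simp add: U_eq)
  qed
  moreover have "\<And>x. x \<notin> Om \<Longrightarrow> W x = 0"
    using outside by (simp add: W_def)
  ultimately show ?thesis
    using that by blast
qed

lemma weak_sol_exists:
  assumes "L2 F"
  shows "\<exists>w WR WT. H10 (\<lambda>x. rho (fst x) powr (m - 1) * w x) WR WT \<and>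
    weak_sol a m F (\<lambda>x. rho (fst x) powr (m - 1) * w x) WR WT \<and>
    H1norm (\<lambda>x. rho (fst x) powr (m - 1) * w x) WR WT \<le> Kcoer * Kload * L2norm F"
proof -
  obtain W WR WT where "H10 W WR WT" "weak_sol a m F W WR WT" "\<And>x. x \<notin> Om \<Longrightarrow> W x = 0"
    "H1norm W WR WT \<le> Kcoer * Kload * L2norm F"
    using weak_sol_exists_vanishing_outside[OF assms] by blast
  moreover have "(\<lambda>x. rho (fst x) powr (m - 1) * (W x / rho (fst x) powr (m - 1))) = W"
  proof
    fix x
    show "rho (fst x) powr (m - 1) * (W x / rho (fst x) powr (m - 1)) = W x"
      using calculation(3)[of x] rho_pos_Om[of x] by (cases "x \<in> Om") simp_all
  qed
  ultimately show ?thesis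
    by (intro exI[of _ "\<lambda>x. W x / rho (fst x) powr (m - 1)"] exI[of _ WR] exI[of _ WT]) simp
qed

end

text \<open>The hypotheses on \<open>j\<close> and the non-half-integrality of \<open>m\<close> are only used through
  \<open>m > 2\<close>, which makes the coefficient \<open>(m - 1) (m - 2)\<close> positive.\<close>

theorem proposition6p2:
  fixes a m :: real and j :: int
  assumes "a \<ge> 4" and "j \<ge> 4"
    and "m \<notin> range (\<lambda>k::int. real_of_int k / 2)"
    and "m \<ge> real_of_int j + 2"
  shows "\<exists>C. \<forall>F. L2 F \<longrightarrow>
     (\<exists>w WR WT.
        H10 (\<lambda>x. rho (fst x) powr (m - 1) * w x) WR WT \<and>
        weak_sol a m F (\<lambda>x. rho (fst x) powr (m - 1) * w x) WR WT \<and>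
        H1norm (\<lambda>x. rho (fst x) powr (m - 1) * w x) WR WT \<le> C * L2norm F) \<and>
     (\<forall>w1 w2.
        (\<exists>WR WT. H10 (\<lambda>x. rho (fst x) powr (m - 1) * w1 x) WR WT \<and>
                  weak_sol a m F (\<lambda>x. rho (fst x) powr (m - 1) * w1 x) WR WT) \<longrightarrow>
        (\<exists>WR WT. H10 (\<lambda>x. rho (fst x) powr (m - 1) * w2 x) WR WT \<and>
                  weak_sol a m F (\<lambda>x. rho (fst x) powr (m - 1) * w2 x) WR WT) \<longrightarrow>
        (AE x in lborel. x \<in> Om \<longrightarrow> w1 x = w2 x))"
proof -
  have "m > 2"
    using assms(2,4) by linarith
  then interpret weighted_problem a m
    using assms(1) by unfold_locales
  show ?thesis
    using weak_sol_exists weak_sol_unique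
    by (intro exI[of _ "Kcoer * Kload"] allI impI conjI) blast+
qed

end
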